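(* Assume $m\ge k+1$ and let $\tilde G_{k+1}(\Omega)=\big(-\Delta^\eta_\Omega+\bar\mu_k+a_{k+1}L^{-2}Q_{\Omega,k+1}^*Q_{\Omega,k+1}\big)^{-1}$. There exist constants $c>0,c_1>0$ depending only on $d$ and $a$ (independent of $k,m,L,\bar\mu_0$) such that for all $w,w'\in\Omega_{k+1}$ and $f,f'\in\mathcal L^2(\Omega)$ with $\mathrm{supp} f\subset B_{k+1}(w)$, $\mathrm{supp} f'\subset B_{k+1}(w')$, $$|\langle f,\tilde G_{k+1}(\Omega)f'\rangle|\le c\,L^2\,e^{-c_1 L^{-1}|w-w'|}\,\|f\|_2\|f'\|_2 .$$
   Context: Standing setup. Fix an integer $d\ge1$, an odd integer $L>1$, integers $k\ge1$, $m\ge k$, and set $\eta=L^{-k}$. Let $\Omega=\eta\{0,1,\dots,L^m-1\}^d$ and, for $0\le j\le m$, $\Omega_j=(L^j\eta)\{0,1,\dots,L^{m-j}-1\}^d$. $\mathcal L^2(\Omega)$: complex functions with $\langle f,g\rangle=\eta^d\sum_{x\in\Omega}\overline{f(x)}g(x)$; $\mathcal L^2(\Omega_j)$ with $(L^j\eta)^d\sum_{y\in\Omega_j}$. For $y\in (L^j\eta)\mathbb Z^d$, $B_j(y)=\{x\in\eta\mathbb Z^d:\ y_\mu\le x_\mu<y_\mu+L^j\eta\ \forall\mu\}$. Averaging operator $(Q_{\Omega,j}f)(y)=L^{-jd}\sum_{x\in B_j(y)}f(x)$, $y\in\Omega_j$, with adjoint $(Q_{\Omega,j}^*h)(x)=h(y_x)$,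 $x\in B_j(y_x)$. Neumann Laplacian $(\Delta^\eta_\Omega f)(x)=\eta^{-2}\sum_{\mu}(f(x+\eta e_\mu)-2f(x)+f(x-\eta e_\mu))$, where $f(x\pm\eta e_\mu)$ is replaced by $f(x)$ if $x\pm\eta e_\mu\notin\Omega$. Fix $a\in(0,1]$, $a_j=a\frac{1-L^{-2}}{1-L^{-2j}}$, $\bar\mu_0\ge0$, $\bar\mu_j=L^{2j}\bar\mu_0$. *)

theory Defs
  imports Complex_Main
begin

text \<open>Lattice points x = s * n are encoded by their integer coordinate vectors
  n :: nat \<Rightarrow> int (coordinates mu < d, zero beyond d).
  grid d N = {0,...,N-1}^d.  Omega = eta * grid d (L^m), Omega_j = (L^j eta) * grid d (L^(m-j)).\<close>

definition grid :: "nat \<Rightarrow> nat \<Rightarrow> (nat \<Rightarrow> int) set" where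
  "grid d N = {n. (\<forall>\<mu><d. 0 \<le> n \<mu> \<and> n \<mu> < int N) \<and> (\<forall>\<mu>. d \<le> \<mu> \<longrightarrow> n \<mu> = 0)}"

text \<open>B_j(y) for y = (L^j eta) * j0, as a set of fine coordinates (x = eta * n); s = L^j.\<close>
definition block :: "nat \<Rightarrow> int \<Rightarrow> (nat \<Rightarrow> int) \<Rightarrow> (nat \<Rightarrow> int) set" where
  "block d s y = {n. (\<forall>\<mu><d. s * y \<mu> \<le> n \<mu> \<and> n \<mu> < s * y \<mu> + s) \<and> (\<forall>\<mu>. d \<le> \<mu> \<longrightarrow> n \<mu> = 0)}"

definition inner_L2 :: "nat \<Rightarrow> real \<Rightarrow> (nat \<Rightarrow> int) set \<Rightarrow> ((nat \<Rightarrow> int) \<Rightarrow> complex)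
    \<Rightarrow> ((nat \<Rightarrow> int) \<Rightarrow> complex) \<Rightarrow> complex" where
  "inner_L2 d eta Om f g = complex_of_real (eta ^ d) * (\<Sum>x\<in>Om. cnj (f x) * g x)"

definition norm_L2 :: "nat \<Rightarrow> real \<Rightarrow> (nat \<Rightarrow> int) set \<Rightarrow> ((nat \<Rightarrow> int) \<Rightarrow> complex) \<Rightarrow> real" where
  "norm_L2 d eta Om f = sqrt (eta ^ d * (\<Sum>x\<in>Om. (cmod (f x))\<^sup>2))"

definition nbr :: "(nat \<Rightarrow> int) set \<Rightarrow> (nat \<Rightarrow> int) \<Rightarrow> nat \<Rightarrow> int \<Rightarrow> (nat \<Rightarrow> int)" where
  "nbr Om x \<mu> s = (if x(\<mu> := x \<mu> + s) \<in> Om then x(\<mu> := x \<mu> + s) else x)"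

definition neumann_lap :: "nat \<Rightarrow> real \<Rightarrow> (nat \<Rightarrow> int) set \<Rightarrow> ((nat \<Rightarrow> int) \<Rightarrow> complex)
    \<Rightarrow> (nat \<Rightarrow> int) \<Rightarrow> complex" where
  "neumann_lap d eta Om f x = complex_of_real (1 / eta ^ 2) *
     (\<Sum>\<mu><d. f (nbr Om x \<mu> 1) - 2 * f x + f (nbr Om x \<mu> (-1)))"

definition Qavg :: "nat \<Rightarrow> nat \<Rightarrow> nat \<Rightarrow> ((nat \<Rightarrow> int) \<Rightarrow> complex) \<Rightarrow> (nat \<Rightarrow> int) \<Rightarrow> complex" where
  "Qavg d L j f y = complex_of_real (1 / real L ^ (j * d)) * (\<Sum>x\<in>block d (int (L ^ j)) y. f x)"

definition Qadj :: "nat \<Rightarrow> nat \<Rightarrow> ((nat \<Rightarrow> int) \<Rightarrow> complex) \<Rightarrow> (nat \<Rightarrow> int) \<Rightarrow> complex" where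
  "Qadj L j h x = h (\<lambda>\<mu>. x \<mu> div int (L ^ j))"

definition a_seq :: "real \<Rightarrow> nat \<Rightarrow> nat \<Rightarrow> real" where
  "a_seq a L j = a * (1 - real L powr (-2)) / (1 - real L powr (- 2 * real j))"

definition mu_bar :: "real \<Rightarrow> nat \<Rightarrow> nat \<Rightarrow> real" where
  "mu_bar mu0 L j = real L ^ (2 * j) * mu0"

text \<open>The operator -Delta + mu_k + a_{k+1} L^{-2} Q*_{k+1} Q_{k+1} on L^2(Omega),
  functions on Omega being represented as functions vanishing off Omega.\<close>
definition Hop :: "nat \<Rightarrow> nat \<Rightarrow> nat \<Rightarrow> nat \<Rightarrow> real \<Rightarrow> real \<Rightarrow>
    ((nat \<Rightarrow> int) \<Rightarrow> complex) \<Rightarrow> (nat \<Rightarrow> int) \<Rightarrow> complex" where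
  "Hop d L k m a mu0 f x =
    (let eta = 1 / real L ^ k; Om = grid d (L ^ m) in
     if x \<in> Om then
       - neumann_lap d eta Om f x + complex_of_real (mu_bar mu0 L k) * f x
       + complex_of_real (a_seq a L (k + 1) / (real L)\<^sup>2) * Qadj L (k + 1) (Qavg d L (k + 1) f) x
     else 0)"

definition Gtilde :: "nat \<Rightarrow> nat \<Rightarrow> nat \<Rightarrow> nat \<Rightarrow> real \<Rightarrow> real \<Rightarrow>
    ((nat \<Rightarrow> int) \<Rightarrow> complex) \<Rightarrow> (nat \<Rightarrow> int) \<Rightarrow> complex" where
  "Gtilde d L k m a mu0 =
     inv_into {f. \<forall>x. x \<notin> grid d (L ^ m) \<longrightarrow> f x = 0} (Hop d L k m a mu0)"

end

theory Submission
  imports Defs "HOL-Analysis.Analysis" "HOL-Library.Function_Algebras"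
begin

text \<open>A Combes--Thomas argument. Let N = L^(k+1) be the side length, in lattice units, of a
  block B_{k+1}, and weight by \<rho>(x) = exp(\<gamma> |x - N w'|_1 / N), centred at the block of f',
  with \<gamma> small depending only on d and a. The quadratic form of the operator weighted by \<rho>^2
  stays coercive with constant of order L^(-2): summation by parts turns the Laplacian term into
  the Dirichlet energy of \<rho> g up to a relative error (\<gamma>/N)^2, the averaging term into the block
  averages of \<rho> g up to a factor 1 + O(\<gamma>), and a Poincar\'e inequality on blocks bounds the mass
  of \<rho> g by N^2 times its energy plus its block averages; as the Laplacian carries the factor
  \<eta>^(-2) = L^(2k), only L^(-2) is lost. Coercivity makes the operator injective, hence
  invertible on functions on \<Omega>, and bounds the weighted norm of G f' by L^2 times that of f',
  on whose block \<rho> is bounded. On the block of f the weight is at least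
  exp(\<gamma> |w - w'|_1 - d \<gamma>), which gives the decay.\<close>

section \<open>Discrete Poincar\'e inequality on cubes\<close>

definition cube :: "nat set \<Rightarrow> (nat \<Rightarrow> int) \<Rightarrow> nat \<Rightarrow> (nat \<Rightarrow> int) set" where
  "cube D b N = {n. (\<forall>\<mu>\<in>D. b \<mu> \<le> n \<mu> \<and> n \<mu> < b \<mu> + int N) \<and> (\<forall>\<mu>. \<mu> \<notin> D \<longrightarrow> n \<mu> = b \<mu>)}"

lemma cube_empty: "cube {} b N = {b}"
  by (auto simp: cube_def)

lemma cube_insert:
  assumes "j \<notin> D"
  shows "cube (insert j D) b N = (\<Union>t\<in>{b j..<b j + int N}. cube D (b(j := t)) N)"
proof (intro equalityI subsetI)
  fix n assume "n \<in> cube (insert j D) b N"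
  then show "n \<in> (\<Union>t\<in>{b j..<b j + int N}. cube D (b(j := t)) N)"
    using assms by (auto simp: cube_def intro!: bexI[of _ "n j"])
qed (use assms in \<open>auto simp: cube_def split: if_splits\<close>)

lemma cube_fixed_coord: "j \<notin> D \<Longrightarrow> z \<in> cube D b N \<Longrightarrow> z j = b j"
  by (auto simp: cube_def)

lemma finite_cube: "finite D \<Longrightarrow> finite (cube D b N)"
  by (induction D arbitrary: b rule: finite_induct) (simp_all add: cube_empty cube_insert)

lemma sum_cube_insert:
  assumes "j \<notin> D" "finite D"
  shows "(\<Sum>z\<in>cube (insert j D) b N. F z) = (\<Sum>t\<in>{b j..<b j + int N}. \<Sum>z\<in>cube D (b(j := t)) N. F z)"
  unfolding cube_insert[OF assms(1)]
proof (rule sum.UNION_disjoint)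
  show "\<forall>s\<in>{b j..<b j + int N}. \<forall>t\<in>{b j..<b j + int N}. s \<noteq> t \<longrightarrow>
      cube D (b(j := s)) N \<inter> cube D (b(j := t)) N = {}"
    using assms(1) by (auto simp: cube_def)
qed (auto simp: finite_cube assms)

lemma card_cube: "finite D \<Longrightarrow> card (cube D b N) = N ^ card D"
proof (induction D arbitrary: b rule: finite_induct)
  case (insert j D)
  have "card (cube (insert j D) b N) = (\<Sum>t\<in>{b j..<b j + int N}. \<Sum>z\<in>cube D (b(j := t)) N. 1)"
    using sum_cube_insert[OF insert(2,1), of "\<lambda>_. 1::nat"] by simp
  then show ?case using insert by simp
qed (simp add: cube_empty)

lemma sum_cube_shift_slice:
  assumes "j \<notin> D"
  shows "(\<Sum>z\<in>cube D (b(j := t)) N. F z) = (\<Sum>v\<in>cube D b N. F (v(j := t)))"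
proof (rule sum.reindex_bij_witness[of _ "\<lambda>v. v(j := t)" "\<lambda>z. z(j := b j)"])
  fix z assume z: "z \<in> cube D (b(j := t)) N"
  then have "z j = t" using cube_fixed_coord[OF assms z] by simp
  then show "z(j := b j, j := t) = z" "F (z(j := b j, j := t)) = F z" by auto
  show "z(j := b j) \<in> cube D b N" using z assms by (auto simp: cube_def)
next
  fix v assume v: "v \<in> cube D b N"
  then have "v j = b j" using cube_fixed_coord[OF assms v] by simp
  then show "v(j := t, j := b j) = v" by auto
  show "v(j := t) \<in> cube D (b(j := t)) N" using v assms by (auto simp: cube_def)
qed

lemma sum_cube_insert_lines:
  assumes "j \<notin> D" "finite D"
  shows "(\<Sum>z\<in>cube (insert j D) b N. F z) = (\<Sum>v\<in>cube D b N. \<Sum>t\<in>{b j..<b j + int N}. F (v(j := t)))"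
  unfolding sum_cube_insert[OF assms] sum_cube_shift_slice[OF assms(1)] by (rule sum.swap)

definition line_energy :: "(int \<Rightarrow> complex) \<Rightarrow> int \<Rightarrow> nat \<Rightarrow> real" where
  "line_energy g lo N =
     (\<Sum>t\<in>{lo..<lo + int N}. if t + 1 < lo + int N then (cmod (g t - g (t + 1)))\<^sup>2 else 0)"

definition cube_energy :: "nat set \<Rightarrow> (nat \<Rightarrow> int) \<Rightarrow> nat \<Rightarrow> ((nat \<Rightarrow> int) \<Rightarrow> complex) \<Rightarrow> real" where
  "cube_energy D b N h = (\<Sum>\<mu>\<in>D. \<Sum>z\<in>cube D b N.
     if z \<mu> + 1 < b \<mu> + int N then (cmod (h z - h (z(\<mu> := z \<mu> + 1))))\<^sup>2 else 0)"

lemma line_energy_nonneg: "line_energy g lo N \<ge> 0"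
  unfolding line_energy_def by (intro sum_nonneg) auto

lemma cube_energy_nonneg: "cube_energy D b N h \<ge> 0"
  unfolding cube_energy_def by (intro sum_nonneg) auto

lemma cube_energy_insert:
  assumes "j \<notin> D" "finite D"
  shows "cube_energy (insert j D) b N h = (\<Sum>t\<in>{b j..<b j + int N}. cube_energy D (b(j := t)) N h)
     + (\<Sum>v\<in>cube D b N. line_energy (\<lambda>s. h (v(j := s))) (b j) N)"
proof -
  let ?e = "\<lambda>c z \<mu>. if z \<mu> + 1 < c \<mu> + int N then (cmod (h z - h (z(\<mu> := z \<mu> + 1))))\<^sup>2 else 0"
  have along_j: "(\<Sum>z\<in>cube (insert j D) b N. ?e b z j)
      = (\<Sum>v\<in>cube D b N. line_energy (\<lambda>s. h (v(j := s))) (b j) N)"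
    unfolding sum_cube_insert_lines[OF assms] line_energy_def by (intro sum.cong refl) simp
  have "(\<Sum>\<mu>\<in>D. \<Sum>z\<in>cube (insert j D) b N. ?e b z \<mu>)
      = (\<Sum>\<mu>\<in>D. \<Sum>t\<in>{b j..<b j + int N}. \<Sum>z\<in>cube D (b(j := t)) N. ?e (b(j := t)) z \<mu>)"
    unfolding sum_cube_insert[OF assms] by (intro sum.cong refl) (use assms(1) in auto)
  also have "\<dots> = (\<Sum>t\<in>{b j..<b j + int N}. cube_energy D (b(j := t)) N h)"
    unfolding cube_energy_def by (rule sum.swap)
  finally show ?thesis
    unfolding cube_energy_def[of "insert j D"] using assms along_j by (simp add: sum.insert)
qed

lemma norm_diff_sq_le: "(cmod (u - w))\<^sup>2 \<le> 2 * (cmod (u - v))\<^sup>2 + 2 * (cmod (v - w))\<^sup>2"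
proof -
  have "cmod (u - w) \<le> cmod (u - v) + cmod (v - w)"
    using norm_diff_triangle_le[of u v "cmod (u - v)" w "cmod (v - w)"] by simp
  then have "(cmod (u - w))\<^sup>2 \<le> (cmod (u - v) + cmod (v - w))\<^sup>2"
    by (simp add: power_mono)
  also have "\<dots> \<le> 2 * (cmod (u - v))\<^sup>2 + 2 * (cmod (v - w))\<^sup>2"
    using zero_le_power2[of "cmod (u - v) - cmod (v - w)"] by (simp add: power2_eq_square algebra_simps)
  finally show ?thesis .
qed

lemma sum_squared_le_card_sum_squares: "(\<Sum>i\<in>I. x i :: real)\<^sup>2 \<le> real (card I) * (\<Sum>i\<in>I. (x i)\<^sup>2)"
  using Cauchy_Schwarz_ineq_sum[of "\<lambda>i. x i" "\<lambda>_. 1" I] by (simp add: mult.commute)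

text \<open>Telescoping along the segment from s to t and Cauchy--Schwarz.\<close>

lemma line_diff_sq_le_energy_ordered:
  assumes "s \<in> {lo..<lo + int N}" "t \<in> {lo..<lo + int N}" "s \<le> t"
  shows "(cmod (g t - g s))\<^sup>2 \<le> real N * line_energy g lo N"
proof -
  let ?e = "\<lambda>u. if u + 1 < lo + int N then (cmod (g u - g (u + 1)))\<^sup>2 else 0"
  let ?a = "\<lambda>i. g (s + int i + 1) - g (s + int i)"
  define n where "n = nat (t - s)"
  have tn: "t = s + int n" and nN: "n \<le> N" using assms n_def by auto
  have "g t - g s = (\<Sum>i<n. ?a i)"
    using sum_lessThan_telescope[of "\<lambda>i. g (s + int i)" n] tn by (simp add: ac_simps)
  then have "cmod (g t - g s) \<le> (\<Sum>i<n. cmod (?a i))"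
    by (simp add: norm_sum)
  then have "(cmod (g t - g s))\<^sup>2 \<le> (\<Sum>i<n. cmod (?a i))\<^sup>2"
    by (simp add: power_mono)
  also have "\<dots> \<le> real n * (\<Sum>i<n. (cmod (?a i))\<^sup>2)"
    using sum_squared_le_card_sum_squares[of "\<lambda>i. cmod (?a i)" "{..<n}"] by simp
  also have "(\<Sum>i<n. (cmod (?a i))\<^sup>2) = (\<Sum>i<n. ?e (s + int i))"
    using assms tn by (intro sum.cong refl) (auto simp: norm_minus_commute)
  also have "\<dots> = (\<Sum>u\<in>(\<lambda>i. s + int i) ` {..<n}. ?e u)"
    by (rule sum.reindex[symmetric, unfolded comp_def]) (simp add: inj_on_def)
  also have "\<dots> \<le> line_energy g lo N"
    unfolding line_energy_def by (rule sum_mono2) (use assms tn in auto)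
  finally have "(cmod (g t - g s))\<^sup>2 \<le> real n * line_energy g lo N"
    by (simp add: mult_left_mono)
  also have "\<dots> \<le> real N * line_energy g lo N"
    using nN by (intro mult_right_mono line_energy_nonneg) simp
  finally show ?thesis .
qed

lemma line_diff_sq_le_energy:
  assumes "s \<in> {lo..<lo + int N}" "t \<in> {lo..<lo + int N}"
  shows "(cmod (g s - g t))\<^sup>2 \<le> real N * line_energy g lo N"
  using line_diff_sq_le_energy_ordered[OF assms] line_diff_sq_le_energy_ordered[OF assms(2,1)]
  by (cases "s \<le> t") (simp_all add: norm_minus_commute)

lemma line_poincare:
  "(\<Sum>s\<in>{lo..<lo + int N}. \<Sum>t\<in>{lo..<lo + int N}. (cmod (g s - g t))\<^sup>2) \<le> real N ^ 3 * line_energy g lo N"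
proof -
  have "(\<Sum>s\<in>{lo..<lo + int N}. \<Sum>t\<in>{lo..<lo + int N}. (cmod (g s - g t))\<^sup>2)
     \<le> (\<Sum>s\<in>{lo..<lo + int N}. \<Sum>t\<in>{lo..<lo + int N}. real N * line_energy g lo N)"
    by (intro sum_mono line_diff_sq_le_energy)
  then show ?thesis by (simp add: power3_eq_cube)
qed

text \<open>Two points of the cube are joined through the point that has the first point's
  j-th coordinate and agrees with the second one elsewhere.\<close>

lemma sum_pairs_cube_insert_le:
  fixes b :: "nat \<Rightarrow> int" and N :: nat
  assumes "j \<notin> D" "finite D"
  defines "T \<equiv> {b j..<b j + int N}"
  shows "(\<Sum>x\<in>cube (insert j D) b N. \<Sum>y\<in>cube (insert j D) b N. (cmod (h x - h y))\<^sup>2)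
    \<le> 2 * real N * (\<Sum>s\<in>T. \<Sum>x\<in>cube D (b(j := s)) N. \<Sum>y\<in>cube D (b(j := s)) N. (cmod (h x - h y))\<^sup>2)
      + 2 * real N ^ card D * (\<Sum>v\<in>cube D b N. \<Sum>s\<in>T. \<Sum>t\<in>T. (cmod (h (v(j := s)) - h (v(j := t))))\<^sup>2)"
proof -
  define C where "C s = cube D (b(j := s)) N" for s
  have "(\<Sum>x\<in>cube (insert j D) b N. \<Sum>y\<in>cube (insert j D) b N. (cmod (h x - h y))\<^sup>2)
      = (\<Sum>s\<in>T. \<Sum>x\<in>C s. \<Sum>t\<in>T. \<Sum>y\<in>C t. (cmod (h x - h y))\<^sup>2)"
    unfolding T_def C_def by (simp add: sum_cube_insert[OF assms(1,2)])
  also have "\<dots> \<le> (\<Sum>s\<in>T. \<Sum>x\<in>C s. \<Sum>t\<in>T. \<Sum>y\<in>C t.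
       2 * (cmod (h x - h (y(j := s))))\<^sup>2 + 2 * (cmod (h (y(j := s)) - h y))\<^sup>2)"
    by (intro sum_mono norm_diff_sq_le)
  also have "\<dots> = (\<Sum>s\<in>T. \<Sum>x\<in>C s. \<Sum>t\<in>T. \<Sum>y\<in>C t. 2 * (cmod (h x - h (y(j := s))))\<^sup>2)
      + (\<Sum>s\<in>T. \<Sum>x\<in>C s. \<Sum>t\<in>T. \<Sum>y\<in>C t. 2 * (cmod (h (y(j := s)) - h y))\<^sup>2)"
    by (simp only: sum.distrib)
  also have "(\<Sum>s\<in>T. \<Sum>x\<in>C s. \<Sum>t\<in>T. \<Sum>y\<in>C t. 2 * (cmod (h x - h (y(j := s))))\<^sup>2)
      = 2 * real N * (\<Sum>s\<in>T. \<Sum>x\<in>C s. \<Sum>y\<in>C s. (cmod (h x - h y))\<^sup>2)"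
  proof -
    have "(\<Sum>y\<in>C t. 2 * (cmod (h x - h (y(j := s))))\<^sup>2) = (\<Sum>y\<in>C s. 2 * (cmod (h x - h y))\<^sup>2)"
      for s t x
      unfolding C_def by (simp add: sum_cube_shift_slice[OF assms(1)])
    then show ?thesis
      by (simp add: T_def sum_distrib_left algebra_simps)
  qed
  also have "(\<Sum>s\<in>T. \<Sum>x\<in>C s. \<Sum>t\<in>T. \<Sum>y\<in>C t. 2 * (cmod (h (y(j := s)) - h y))\<^sup>2)
      = 2 * real N ^ card D * (\<Sum>v\<in>cube D b N. \<Sum>s\<in>T. \<Sum>t\<in>T. (cmod (h (v(j := s)) - h (v(j := t))))\<^sup>2)"
  proof -
    have "(\<Sum>t\<in>T. \<Sum>y\<in>C t. 2 * (cmod (h (y(j := s)) - h y))\<^sup>2)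
        = (\<Sum>v\<in>cube D b N. \<Sum>t\<in>T. 2 * (cmod (h (v(j := s)) - h (v(j := t))))\<^sup>2)" for s
      unfolding T_def C_def sum_cube_insert[OF assms(1,2), symmetric] sum_cube_insert_lines[OF assms(1,2)]
      by simp
    moreover have "card (C s) = N ^ card D" for s
      unfolding C_def by (rule card_cube[OF assms(2)])
    ultimately show ?thesis
      by (simp add: sum_distrib_left sum.swap[of _ T "cube D b N"] ac_simps)
  qed
  finally show ?thesis unfolding C_def .
qed

lemma cube_poincare_pairs:
  "finite D \<Longrightarrow> (\<Sum>x\<in>cube D b N. \<Sum>y\<in>cube D b N. (cmod (h x - h y))\<^sup>2)
     \<le> 2 ^ card D * real N ^ (card D + 2) * cube_energy D b N h"
proof (induction D arbitrary: b rule: finite_induct)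
  case (insert j D)
  define T where "T = {b j..<b j + int N}"
  define k where "k = card D"
  let ?E = "\<Sum>s\<in>T. cube_energy D (b(j := s)) N h"
  let ?E1 = "\<Sum>v\<in>cube D b N. line_energy (\<lambda>s. h (v(j := s))) (b j) N"
  have E0: "?E \<ge> 0" "?E1 \<ge> 0"
    by (intro sum_nonneg cube_energy_nonneg line_energy_nonneg)+
  have slices: "(\<Sum>s\<in>T. \<Sum>x\<in>cube D (b(j := s)) N. \<Sum>y\<in>cube D (b(j := s)) N. (cmod (h x - h y))\<^sup>2)
      \<le> (\<Sum>s\<in>T. 2 ^ k * real N ^ (k + 2) * cube_energy D (b(j := s)) N h)"
    unfolding k_def by (intro sum_mono insert.IH)
  have lines: "(\<Sum>v\<in>cube D b N. \<Sum>s\<in>T. \<Sum>t\<in>T. (cmod (h (v(j := s)) - h (v(j := t))))\<^sup>2)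
      \<le> (\<Sum>v\<in>cube D b N. real N ^ 3 * line_energy (\<lambda>s. h (v(j := s))) (b j) N)"
    unfolding T_def by (intro sum_mono line_poincare)
  have "(\<Sum>x\<in>cube (insert j D) b N. \<Sum>y\<in>cube (insert j D) b N. (cmod (h x - h y))\<^sup>2)
      \<le> 2 * real N * (\<Sum>s\<in>T. 2 ^ k * real N ^ (k + 2) * cube_energy D (b(j := s)) N h)
        + 2 * real N ^ k * (\<Sum>v\<in>cube D b N. real N ^ 3 * line_energy (\<lambda>s. h (v(j := s))) (b j) N)"
    using sum_pairs_cube_insert_le[OF insert(2,1), where b=b and N=N and h=h]
      mult_left_mono[OF slices, of "2 * real N"] mult_left_mono[OF lines, of "2 * real N ^ k"]
    unfolding T_def k_def by simp
  also have "\<dots> = 2 ^ (k + 1) * real N ^ (k + 3) * ?E + 2 * real N ^ (k + 3) * ?E1"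
    by (simp add: sum_distrib_left power_add power3_eq_cube algebra_simps)
  also have "\<dots> \<le> 2 ^ (k + 1) * real N ^ (k + 3) * (?E + ?E1)"
    using E0 by (simp add: distrib_left mult_right_mono)
  also have "\<dots> = 2 ^ card (insert j D) * real N ^ (card (insert j D) + 2) * cube_energy (insert j D) b N h"
    using insert by (simp add: cube_energy_insert T_def k_def power_add power3_eq_cube)
  finally show ?case .
qed (simp add: cube_empty cube_energy_def)

lemma cmod_power2_eq_Re: "(cmod u)\<^sup>2 = Re (cnj u * u)"
  unfolding cmod_power2 by (simp add: power2_eq_square)

lemma sum_pairs_norm_diff_sq:
  assumes "finite A"
  shows "(\<Sum>x\<in>A. \<Sum>y\<in>A. (cmod (h x - h y))\<^sup>2)
    = 2 * real (card A) * (\<Sum>x\<in>A. (cmod (h x))\<^sup>2) - 2 * (cmod (\<Sum>x\<in>A. h x))\<^sup>2"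
proof -
  have "(\<Sum>x\<in>A. \<Sum>y\<in>A. Re (cnj (h x) * h y)) = Re (cnj (\<Sum>x\<in>A. h x) * (\<Sum>x\<in>A. h x))"
    by (simp add: cnj_sum sum_product Re_sum)
  then have cross: "(\<Sum>x\<in>A. \<Sum>y\<in>A. Re (cnj (h x) * h y)) = (cmod (\<Sum>x\<in>A. h x))\<^sup>2"
    by (simp add: cmod_power2_eq_Re)
  define q where "q x = (cmod (h x))\<^sup>2" for x
  define r where "r x y = Re (cnj (h x) * h y)" for x y
  have "(cmod (h x - h y))\<^sup>2 = q x + q y - 2 * r x y" for x y
    unfolding q_def r_def cmod_power2 by (simp add: power2_eq_square algebra_simps)
  then have "(\<Sum>x\<in>A. \<Sum>y\<in>A. (cmod (h x - h y))\<^sup>2) = (\<Sum>x\<in>A. \<Sum>y\<in>A. q x + q y - 2 * r x y)"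
    by simp
  also have "\<dots> = 2 * real (card A) * (\<Sum>x\<in>A. q x) - 2 * (\<Sum>x\<in>A. \<Sum>y\<in>A. r x y)"
    by (simp add: sum.distrib sum_subtractf sum_distrib_left[symmetric] sum_distrib_right[symmetric]
        algebra_simps)
  finally have "(\<Sum>x\<in>A. \<Sum>y\<in>A. (cmod (h x - h y))\<^sup>2) = 2 * real (card A) * (\<Sum>x\<in>A. q x) - 2 * (\<Sum>x\<in>A. \<Sum>y\<in>A. r x y)" .
  then show ?thesis
    using cross unfolding q_def r_def by simp
qed

lemma cube_poincare:
  assumes "finite D" "N > 0"
  shows "(\<Sum>x\<in>cube D b N. (cmod (h x))\<^sup>2)
     \<le> 2 ^ card D * real N ^ 2 * cube_energy D b N h + (cmod (\<Sum>x\<in>cube D b N. h x))\<^sup>2 / real N ^ card D"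
proof -
  let ?V = "real N ^ card D"
  have "2 * ?V * (\<Sum>x\<in>cube D b N. (cmod (h x))\<^sup>2) - 2 * (cmod (\<Sum>x\<in>cube D b N. h x))\<^sup>2
      \<le> 2 ^ card D * real N ^ (card D + 2) * cube_energy D b N h"
    using cube_poincare_pairs[OF assms(1), where b=b and N=N and h=h] sum_pairs_norm_diff_sq[OF finite_cube[OF assms(1)]]
    by (simp add: card_cube[OF assms(1)])
  moreover have "2 ^ card D * real N ^ (card D + 2) * cube_energy D b N h
      = ?V * (2 ^ card D * real N ^ 2 * cube_energy D b N h)"
    by (simp add: power_add power2_eq_square)
  moreover have "?V * (2 ^ card D * real N ^ 2 * cube_energy D b N h) \<ge> 0"
    using cube_energy_nonneg[of D b N h] by simp
  ultimately have "?V * (\<Sum>x\<in>cube D b N. (cmod (h x))\<^sup>2)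
      \<le> ?V * (2 ^ card D * real N ^ 2 * cube_energy D b N h) + (cmod (\<Sum>x\<in>cube D b N. h x))\<^sup>2"
    by linarith
  moreover have "?V > 0" using assms by simp
  ultimately show ?thesis by (simp add: field_simps)
qed

section \<open>Blocks of the grid\<close>

lemma grid_eq_cube: "grid d M = cube {..<d} (\<lambda>_. 0) M"
  by (auto simp: grid_def cube_def)

lemma block_eq_cube:
  assumes "\<forall>\<mu>. d \<le> \<mu> \<longrightarrow> w \<mu> = 0"
  shows "block d (int N) w = cube {..<d} (\<lambda>\<mu>. int N * w \<mu>) N"
  using assms by (auto simp: block_def cube_def)

lemma grid_outside: "w \<in> grid d M \<Longrightarrow> d \<le> \<mu> \<Longrightarrow> w \<mu> = 0"
  by (auto simp: grid_def)

lemma finite_grid: "finite (grid d M)"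
  by (simp add: grid_eq_cube finite_cube)

lemma card_block: "w \<in> grid d M \<Longrightarrow> card (block d (int N) w) = N ^ d"
  using block_eq_cube[of d w N] grid_outside[of w d M] card_cube[of "{..<d}"] by simp

lemma finite_block: "w \<in> grid d M \<Longrightarrow> finite (block d (int N) w)"
  using block_eq_cube[of d w N] grid_outside[of w d M] finite_cube[of "{..<d}"] by simp

lemma int_div_eq_iff:
  assumes "0 < (N::int)"
  shows "x div N = q \<longleftrightarrow> N * q \<le> x \<and> x < N * q + N"
proof
  show "N * q \<le> x \<and> x < N * q + N" if "x div N = q"
    using mult_div_mod_eq[of N x] pos_mod_sign[OF assms, of x] pos_mod_bound[OF assms, of x]
    unfolding that by linarith
  show "N * q \<le> x \<and> x < N * q + N \<Longrightarrow> x div N = q"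
    by (intro int_div_pos_eq[of x N q "x - N * q"]) auto
qed

definition block_index :: "nat \<Rightarrow> (nat \<Rightarrow> int) \<Rightarrow> (nat \<Rightarrow> int)" where
  "block_index N x = (\<lambda>\<mu>. x \<mu> div int N)"

lemma mem_block_iff:
  assumes "N > 0" "w \<in> grid d M"
  shows "x \<in> block d (int N) w \<longleftrightarrow> block_index N x = w \<and> (\<forall>\<mu>. d \<le> \<mu> \<longrightarrow> x \<mu> = 0)"
proof -
  have coord: "x \<mu> div int N = w \<mu> \<longleftrightarrow> int N * w \<mu> \<le> x \<mu> \<and> x \<mu> < int N * w \<mu> + int N" for \<mu>
    using int_div_eq_iff assms(1) by simp
  have outside: "w \<mu> = 0" if "d \<le> \<mu>" for \<mu>
    using grid_outside[OF assms(2) that] .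
  show ?thesis
  proof
    assume x: "x \<in> block d (int N) w"
    then have "x \<mu> div int N = w \<mu>" for \<mu>
      using coord outside by (cases "\<mu> < d") (auto simp: block_def)
    then show "block_index N x = w \<and> (\<forall>\<mu>. d \<le> \<mu> \<longrightarrow> x \<mu> = 0)"
      using x by (auto simp: block_def block_index_def)
  next
    assume "block_index N x = w \<and> (\<forall>\<mu>. d \<le> \<mu> \<longrightarrow> x \<mu> = 0)"
    then show "x \<in> block d (int N) w"
      using coord by (auto simp: block_def block_index_def)
  qed
qed

lemma grid_mult_coord:
  assumes "0 < N"
  shows "(0 \<le> x \<and> x < N * M) \<longleftrightarrow> (0 \<le> x div N \<and> x div N < (M::int))"
proof -
  have "N * (x div N) \<le> x" "x < N * (x div N) + N"
    using int_div_eq_iff[OF assms] by blast+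
  moreover have "N * (x div N) < N * M \<longleftrightarrow> x div N < M"
    using assms by simp
  moreover have "N * (x div N) + N \<le> N * M \<longleftrightarrow> x div N + 1 \<le> M"
    using assms mult_le_cancel_left_pos[OF assms, of "x div N + 1" M] by (simp add: algebra_simps)
  ultimately show ?thesis
    using assms pos_imp_zdiv_nonneg_iff[OF assms, of x] by linarith
qed

lemma grid_eq_UN_blocks:
  assumes "N > 0"
  shows "grid d (N * M) = (\<Union>w\<in>grid d M. block d (int N) w)"
proof -
  have "(0 \<le> x \<mu> \<and> x \<mu> < int (N * M)) \<longleftrightarrow> (0 \<le> x \<mu> div int N \<and> x \<mu> div int N < int M)"
    for x :: "nat \<Rightarrow> int" and \<mu>
    using grid_mult_coord[of "int N" "x \<mu>" "int M"] assms by simp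
  then have "x \<in> grid d (N * M) \<longleftrightarrow> block_index N x \<in> grid d M \<and> (\<forall>\<mu>. d \<le> \<mu> \<longrightarrow> x \<mu> = 0)" for x
    unfolding grid_def block_index_def by auto
  then show ?thesis
    using mem_block_iff[OF assms] by (auto intro!: bexI[of _ "block_index N _"])
qed

lemma block_subset_grid:
  assumes "w \<in> grid d (L ^ (m - j))" "j \<le> m" "L > 0"
  shows "block d (int (L ^ j)) w \<subseteq> grid d (L ^ m)"
proof -
  have "L ^ m = L ^ j * L ^ (m - j)"
    using assms(2) by (simp add: power_add[symmetric])
  then show ?thesis
    using grid_eq_UN_blocks[of "L ^ j" d "L ^ (m - j)"] assms(1,3) by auto
qed

lemma sum_grid_blocks:
  assumes "N > 0"
  shows "(\<Sum>x\<in>grid d (N * M). F x) = (\<Sum>w\<in>grid d M. \<Sum>x\<in>block d (int N) w. F x)"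
  unfolding grid_eq_UN_blocks[OF assms]
proof (rule sum.UNION_disjoint)
  show "\<forall>w\<in>grid d M. \<forall>w'\<in>grid d M. w \<noteq> w' \<longrightarrow> block d (int N) w \<inter> block d (int N) w' = {}"
    using mem_block_iff[OF assms] by (metis disjoint_iff)
qed (auto simp: finite_grid finite_block)

lemma sum_block_energies_le:
  assumes "N > 0"
  shows "(\<Sum>w\<in>grid d M. cube_energy {..<d} (\<lambda>\<mu>. int N * w \<mu>) N \<psi>) \<le> cube_energy {..<d} (\<lambda>_. 0) (N * M) \<psi>"
proof -
  let ?D = "\<lambda>z \<mu>. (cmod (\<psi> z - \<psi> (z(\<mu> := z \<mu> + 1))))\<^sup>2"
  have "(\<Sum>w\<in>grid d M. cube_energy {..<d} (\<lambda>\<mu>. int N * w \<mu>) N \<psi>)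
     = (\<Sum>\<mu><d. \<Sum>w\<in>grid d M. \<Sum>z\<in>block d (int N) w. if z \<mu> + 1 < int N * w \<mu> + int N then ?D z \<mu> else 0)"
    unfolding cube_energy_def
    by (subst sum.swap, intro sum.cong refl) (simp add: block_eq_cube grid_outside)
  also have "\<dots> \<le> (\<Sum>\<mu><d. \<Sum>w\<in>grid d M. \<Sum>z\<in>block d (int N) w. if z \<mu> + 1 < int (N * M) then ?D z \<mu> else 0)"
  proof (intro sum_mono)
    fix \<mu> w z assume "\<mu> \<in> {..<d}" and w: "w \<in> grid d M"
    then have "int N * (w \<mu> + 1) \<le> int N * int M"
      by (intro mult_left_mono) (auto simp: grid_def)
    then show "(if z \<mu> + 1 < int N * w \<mu> + int N then ?D z \<mu> else 0)
        \<le> (if z \<mu> + 1 < int (N * M) then ?D z \<mu> else 0)"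
      by (auto simp: algebra_simps)
  qed
  also have "\<dots> = cube_energy {..<d} (\<lambda>_. 0) (N * M) \<psi>"
    unfolding cube_energy_def grid_eq_cube[symmetric] sum_grid_blocks[OF assms] by simp
  finally show ?thesis .
qed

lemma grid_poincare:
  assumes "N > 0"
  shows "(\<Sum>x\<in>grid d (N * M). (cmod (\<psi> x))\<^sup>2)
    \<le> 2 ^ d * real N ^ 2 * cube_energy {..<d} (\<lambda>_. 0) (N * M) \<psi>
      + (\<Sum>w\<in>grid d M. (cmod (\<Sum>x\<in>block d (int N) w. \<psi> x))\<^sup>2 / real N ^ d)"
proof -
  have "(\<Sum>x\<in>grid d (N * M). (cmod (\<psi> x))\<^sup>2) = (\<Sum>w\<in>grid d M. \<Sum>x\<in>block d (int N) w. (cmod (\<psi> x))\<^sup>2)"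
    by (rule sum_grid_blocks[OF assms])
  also have "\<dots> \<le> (\<Sum>w\<in>grid d M. 2 ^ d * real N ^ 2 * cube_energy {..<d} (\<lambda>\<mu>. int N * w \<mu>) N \<psi>
      + (cmod (\<Sum>x\<in>block d (int N) w. \<psi> x))\<^sup>2 / real N ^ d)"
    using cube_poincare[OF finite_lessThan assms] block_eq_cube[of d _ N] grid_outside
    by (intro sum_mono) force
  also have "\<dots> = 2 ^ d * real N ^ 2 * (\<Sum>w\<in>grid d M. cube_energy {..<d} (\<lambda>\<mu>. int N * w \<mu>) N \<psi>)
      + (\<Sum>w\<in>grid d M. (cmod (\<Sum>x\<in>block d (int N) w. \<psi> x))\<^sup>2 / real N ^ d)"
    by (simp add: sum.distrib sum_distrib_left)
  also have "\<dots> \<le> 2 ^ d * real N ^ 2 * cube_energy {..<d} (\<lambda>_. 0) (N * M) \<psi>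
      + (\<Sum>w\<in>grid d M. (cmod (\<Sum>x\<in>block d (int N) w. \<psi> x))\<^sup>2 / real N ^ d)"
    using sum_block_energies_le[OF assms, where d=d and M=M and \<psi>=\<psi>] by (simp add: mult_left_mono)
  finally show ?thesis .
qed

section \<open>The weighted quadratic form of the operator\<close>

lemma sum_grid_shift:
  assumes "\<mu> < d"
  shows "(\<Sum>x\<in>grid d M. if 0 < x \<mu> then F x else 0)
       = (\<Sum>z\<in>grid d M. if z \<mu> + 1 < int M then F (z(\<mu> := z \<mu> + 1)) else 0)"
proof -
  have "(\<Sum>x\<in>{x\<in>grid d M. 0 < x \<mu>}. F x) = (\<Sum>z\<in>{z\<in>grid d M. z \<mu> + 1 < int M}. F (z(\<mu> := z \<mu> + 1)))"
    by (rule sum.reindex_bij_witness[of _ "\<lambda>z. z(\<mu> := z \<mu> + 1)" "\<lambda>x. x(\<mu> := x \<mu> - 1)"])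
      (use assms in \<open>auto simp: grid_def\<close>)
  then show ?thesis
    by (simp add: sum.inter_filter[OF finite_grid])
qed

definition weighted_edge_form ::
    "((nat \<Rightarrow> int) \<Rightarrow> real) \<Rightarrow> ((nat \<Rightarrow> int) \<Rightarrow> complex) \<Rightarrow> (nat \<Rightarrow> int) \<Rightarrow> (nat \<Rightarrow> int) \<Rightarrow> complex" where
  "weighted_edge_form \<rho> g z z' = complex_of_real ((\<rho> z)\<^sup>2) * cnj (g z) * (g z - g z')
     + complex_of_real ((\<rho> z')\<^sup>2) * cnj (g z') * (g z' - g z)"

lemma sum_weighted_neumann_by_parts:
  assumes "\<mu> < d"
  shows "(\<Sum>x\<in>grid d M. complex_of_real ((\<rho> x)\<^sup>2) * cnj (g x) *
      (2 * g x - g (nbr (grid d M) x \<mu> 1) - g (nbr (grid d M) x \<mu> (-1))))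
    = (\<Sum>z\<in>grid d M. if z \<mu> + 1 < int M then weighted_edge_form \<rho> g z (z(\<mu> := z \<mu> + 1)) else 0)"
proof -
  let ?S = "grid d M"
  let ?r = "\<lambda>x. complex_of_real ((\<rho> x)\<^sup>2) * cnj (g x)"
  have "?r x * (2 * g x - g (nbr ?S x \<mu> 1) - g (nbr ?S x \<mu> (-1)))
     = (if x \<mu> + 1 < int M then ?r x * (g x - g (x(\<mu> := x \<mu> + 1))) else 0)
     + (if 0 < x \<mu> then ?r x * (g x - g (x(\<mu> := x \<mu> - 1))) else 0)" if x: "x \<in> ?S" for x
  proof -
    have "x(\<mu> := x \<mu> + 1) \<in> ?S \<longleftrightarrow> x \<mu> + 1 < int M" "x(\<mu> := x \<mu> + (-1)) \<in> ?S \<longleftrightarrow> 0 < x \<mu>"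
      using x assms by (auto simp: grid_def)
    then show ?thesis
      unfolding nbr_def by (simp add: algebra_simps)
  qed
  then have "(\<Sum>x\<in>?S. ?r x * (2 * g x - g (nbr ?S x \<mu> 1) - g (nbr ?S x \<mu> (-1))))
     = (\<Sum>x\<in>?S. if x \<mu> + 1 < int M then ?r x * (g x - g (x(\<mu> := x \<mu> + 1))) else 0)
     + (\<Sum>x\<in>?S. if 0 < x \<mu> then ?r x * (g x - g (x(\<mu> := x \<mu> - 1))) else 0)"
    by (simp add: sum.distrib[symmetric])
  also have "(\<Sum>x\<in>?S. if 0 < x \<mu> then ?r x * (g x - g (x(\<mu> := x \<mu> - 1))) else 0)
     = (\<Sum>z\<in>?S. if z \<mu> + 1 < int M then ?r (z(\<mu> := z \<mu> + 1)) * (g (z(\<mu> := z \<mu> + 1)) - g z) else 0)"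
    by (subst sum_grid_shift[OF assms]) (intro sum.cong refl, simp)
  finally show ?thesis
    by (simp only: sum.distrib[symmetric]) (intro sum.cong refl, simp add: weighted_edge_form_def)
qed

lemma Re_weighted_edge_form_ge:
  fixes p q :: real and u v :: complex
  assumes p: "p > 0" and q: "q > 0" and "(1 - q / p)\<^sup>2 \<le> \<epsilon>" "(1 - p / q)\<^sup>2 \<le> \<epsilon>"
  shows "Re (complex_of_real (p\<^sup>2) * cnj u * (u - v) + complex_of_real (q\<^sup>2) * cnj v * (v - u))
    \<ge> (cmod (of_real p * u - of_real q * v))\<^sup>2 - \<epsilon> / 2 * ((cmod (of_real p * u))\<^sup>2 + (cmod (of_real q * v))\<^sup>2)"
proof -
  have eq: "Re (complex_of_real (p\<^sup>2) * cnj u * (u - v) + complex_of_real (q\<^sup>2) * cnj v * (v - u))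
     = (cmod (of_real p * u - of_real q * v))\<^sup>2 - (p - q)\<^sup>2 * Re (cnj u * v)"
    unfolding cmod_power2 by (simp add: power2_eq_square algebra_simps)
  have "2 * Re (cnj u * v) \<le> (cmod u)\<^sup>2 + (cmod v)\<^sup>2"
    using zero_le_power2[of "Re u - Re v"] zero_le_power2[of "Im u - Im v"]
    unfolding cmod_power2 by (simp add: power2_eq_square algebra_simps)
  then have "(p - q)\<^sup>2 * (2 * Re (cnj u * v)) \<le> (p - q)\<^sup>2 * ((cmod u)\<^sup>2 + (cmod v)\<^sup>2)"
    by (rule mult_left_mono) simp
  then have "2 * ((p - q)\<^sup>2 * Re (cnj u * v)) \<le> (p - q)\<^sup>2 * (cmod u)\<^sup>2 + (p - q)\<^sup>2 * (cmod v)\<^sup>2"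
    by (simp only: distrib_left mult.left_commute)
  also have "(p - q)\<^sup>2 * (cmod u)\<^sup>2 = (1 - q / p)\<^sup>2 * (cmod (of_real p * u))\<^sup>2"
    using p by (simp add: norm_mult power_mult_distrib power2_eq_square field_simps)
  also have "(p - q)\<^sup>2 * (cmod v)\<^sup>2 = (1 - p / q)\<^sup>2 * (cmod (of_real q * v))\<^sup>2"
    using q by (simp add: norm_mult power_mult_distrib power2_eq_square field_simps)
  also have "(1 - q / p)\<^sup>2 * (cmod (of_real p * u))\<^sup>2 + (1 - p / q)\<^sup>2 * (cmod (of_real q * v))\<^sup>2
      \<le> \<epsilon> * (cmod (of_real p * u))\<^sup>2 + \<epsilon> * (cmod (of_real q * v))\<^sup>2"
    using assms(3,4) by (intro add_mono mult_right_mono) auto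
  finally show ?thesis
    unfolding eq by (simp add: algebra_simps)
qed

lemma Re_weighted_edge_sum_ge:
  fixes g :: "(nat \<Rightarrow> int) \<Rightarrow> complex"
  assumes \<mu>: "\<mu> < d" and pos: "\<And>x. \<rho> x > 0" and "\<epsilon> \<ge> 0"
    and ratio: "\<And>z. z \<in> grid d M \<Longrightarrow> z \<mu> + 1 < int M \<Longrightarrow>
      (1 - \<rho> (z(\<mu> := z \<mu> + 1)) / \<rho> z)\<^sup>2 \<le> \<epsilon> \<and> (1 - \<rho> z / \<rho> (z(\<mu> := z \<mu> + 1)))\<^sup>2 \<le> \<epsilon>"
  defines "\<psi> \<equiv> \<lambda>x. complex_of_real (\<rho> x) * g x"
  shows "Re (\<Sum>z\<in>grid d M. if z \<mu> + 1 < int M then weighted_edge_form \<rho> g z (z(\<mu> := z \<mu> + 1)) else 0)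
    \<ge> (\<Sum>z\<in>grid d M. if z \<mu> + 1 < int M then (cmod (\<psi> z - \<psi> (z(\<mu> := z \<mu> + 1))))\<^sup>2 else 0)
      - \<epsilon> * (\<Sum>x\<in>grid d M. (cmod (\<psi> x))\<^sup>2)"
proof -
  let ?S = "grid d M"
  let ?c = "\<lambda>z. z \<mu> + 1 < int M"
  let ?z' = "\<lambda>z. z(\<mu> := z \<mu> + 1)"
  let ?m = "\<lambda>z. (if ?c z then (cmod (\<psi> z))\<^sup>2 else 0) + (if ?c z then (cmod (\<psi> (?z' z)))\<^sup>2 else 0)"
  have edge: "Re (if ?c z then weighted_edge_form \<rho> g z (?z' z) else 0)
     \<ge> (if ?c z then (cmod (\<psi> z - \<psi> (?z' z)))\<^sup>2 else 0) - \<epsilon> / 2 * ?m z" if "z \<in> ?S" for z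
    using ratio[OF that] Re_weighted_edge_form_ge[OF pos pos, of "?z' z" z \<epsilon> "g z" "g (?z' z)"]
    unfolding weighted_edge_form_def \<psi>_def by auto
  have "(\<Sum>z\<in>?S. if ?c z then (cmod (\<psi> (?z' z)))\<^sup>2 else 0) = (\<Sum>x\<in>?S. if 0 < x \<mu> then (cmod (\<psi> x))\<^sup>2 else 0)"
    by (rule sum_grid_shift[OF \<mu>, symmetric])
  also have "\<dots> \<le> (\<Sum>x\<in>?S. (cmod (\<psi> x))\<^sup>2)"
    by (intro sum_mono) auto
  moreover have "(\<Sum>z\<in>?S. if ?c z then (cmod (\<psi> z))\<^sup>2 else 0) \<le> (\<Sum>x\<in>?S. (cmod (\<psi> x))\<^sup>2)"
    by (intro sum_mono) auto
  ultimately have "(\<Sum>z\<in>?S. ?m z) \<le> 2 * (\<Sum>x\<in>?S. (cmod (\<psi> x))\<^sup>2)"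
    by (simp add: sum.distrib)
  then have "\<epsilon> / 2 * (\<Sum>z\<in>?S. ?m z) \<le> \<epsilon> * (\<Sum>x\<in>?S. (cmod (\<psi> x))\<^sup>2)"
    using \<open>\<epsilon> \<ge> 0\<close> mult_left_mono[of _ _ "\<epsilon> / 2"] by fastforce
  moreover have "Re (\<Sum>z\<in>?S. if ?c z then weighted_edge_form \<rho> g z (?z' z) else 0)
      \<ge> (\<Sum>z\<in>?S. if ?c z then (cmod (\<psi> z - \<psi> (?z' z)))\<^sup>2 else 0) - \<epsilon> / 2 * (\<Sum>z\<in>?S. ?m z)"
    unfolding Re_sum sum_distrib_left sum_subtractf[symmetric] by (intro sum_mono edge)
  ultimately show ?thesis
    by linarith
qed

lemma Re_weighted_neumann_ge:
  fixes g :: "(nat \<Rightarrow> int) \<Rightarrow> complex"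
  assumes pos: "\<And>x. \<rho> x > 0" and "\<epsilon> \<ge> 0"
    and ratio: "\<And>\<mu> z. \<mu> < d \<Longrightarrow> z \<in> grid d M \<Longrightarrow> z \<mu> + 1 < int M \<Longrightarrow>
      (1 - \<rho> (z(\<mu> := z \<mu> + 1)) / \<rho> z)\<^sup>2 \<le> \<epsilon> \<and> (1 - \<rho> z / \<rho> (z(\<mu> := z \<mu> + 1)))\<^sup>2 \<le> \<epsilon>"
  defines "\<psi> \<equiv> \<lambda>x. complex_of_real (\<rho> x) * g x"
  shows "Re (\<Sum>x\<in>grid d M. complex_of_real ((\<rho> x)\<^sup>2) * cnj (g x) *
      (\<Sum>\<mu><d. 2 * g x - g (nbr (grid d M) x \<mu> 1) - g (nbr (grid d M) x \<mu> (-1))))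
    \<ge> cube_energy {..<d} (\<lambda>_. 0) M \<psi> - real d * \<epsilon> * (\<Sum>x\<in>grid d M. (cmod (\<psi> x))\<^sup>2)"
proof -
  let ?S = "grid d M"
  have "(\<Sum>x\<in>?S. complex_of_real ((\<rho> x)\<^sup>2) * cnj (g x) *
      (\<Sum>\<mu><d. 2 * g x - g (nbr ?S x \<mu> 1) - g (nbr ?S x \<mu> (-1))))
     = (\<Sum>\<mu><d. \<Sum>x\<in>?S. complex_of_real ((\<rho> x)\<^sup>2) * cnj (g x) *
        (2 * g x - g (nbr ?S x \<mu> 1) - g (nbr ?S x \<mu> (-1))))"
    by (simp add: sum_distrib_left sum.swap[of _ ?S])
  also have "\<dots> = (\<Sum>\<mu><d. \<Sum>z\<in>?S. if z \<mu> + 1 < int M then weighted_edge_form \<rho> g z (z(\<mu> := z \<mu> + 1)) else 0)"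
    by (intro sum.cong refl sum_weighted_neumann_by_parts) simp
  finally have by_parts: "(\<Sum>x\<in>?S. complex_of_real ((\<rho> x)\<^sup>2) * cnj (g x) *
      (\<Sum>\<mu><d. 2 * g x - g (nbr ?S x \<mu> 1) - g (nbr ?S x \<mu> (-1))))
     = (\<Sum>\<mu><d. \<Sum>z\<in>?S. if z \<mu> + 1 < int M then weighted_edge_form \<rho> g z (z(\<mu> := z \<mu> + 1)) else 0)" .
  have "Re (\<Sum>\<mu><d. \<Sum>z\<in>?S. if z \<mu> + 1 < int M then weighted_edge_form \<rho> g z (z(\<mu> := z \<mu> + 1)) else 0)
     \<ge> (\<Sum>\<mu><d. (\<Sum>z\<in>?S. if z \<mu> + 1 < int M then (cmod (\<psi> z - \<psi> (z(\<mu> := z \<mu> + 1))))\<^sup>2 else 0)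
      - \<epsilon> * (\<Sum>x\<in>?S. (cmod (\<psi> x))\<^sup>2))"
    unfolding Re_sum[of _ "{..<d}"] \<psi>_def using assms(2) ratio
    by (intro sum_mono Re_weighted_edge_sum_ge[OF _ pos]) auto
  then show ?thesis
    unfolding by_parts by (simp add: sum_subtractf cube_energy_def grid_eq_cube)
qed

lemma Re_weighted_block_form_ge:
  assumes "finite B" and r: "\<And>x y. x \<in> B \<Longrightarrow> y \<in> B \<Longrightarrow> \<bar>r x y - 1\<bar> \<le> \<delta>"
  shows "Re (\<Sum>x\<in>B. \<Sum>y\<in>B. complex_of_real (r x y) * cnj (\<psi> x) * \<psi> y)
    \<ge> (cmod (\<Sum>x\<in>B. \<psi> x))\<^sup>2 - \<delta> * real (card B) * (\<Sum>x\<in>B. (cmod (\<psi> x))\<^sup>2)"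
proof -
  have square: "(\<Sum>x\<in>B. \<Sum>y\<in>B. Re (cnj (\<psi> x) * \<psi> y)) = (cmod (\<Sum>x\<in>B. \<psi> x))\<^sup>2"
    by (simp add: cnj_sum sum_product Re_sum cmod_power2_eq_Re)
  have pair: "Re (complex_of_real (r x y) * cnj (\<psi> x) * \<psi> y)
      \<ge> Re (cnj (\<psi> x) * \<psi> y) - \<delta> * ((cmod (\<psi> x))\<^sup>2 + (cmod (\<psi> y))\<^sup>2) / 2"
    if xy: "x \<in> B" "y \<in> B" for x y
  proof -
    have "\<bar>(r x y - 1) * Re (cnj (\<psi> x) * \<psi> y)\<bar> \<le> \<delta> * (cmod (\<psi> x) * cmod (\<psi> y))"
      unfolding abs_mult using r[OF xy] abs_Re_le_cmod[of "cnj (\<psi> x) * \<psi> y"]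
      by (intro mult_mono) (auto simp: norm_mult)
    also have "\<dots> \<le> \<delta> * (((cmod (\<psi> x))\<^sup>2 + (cmod (\<psi> y))\<^sup>2) / 2)"
      using r[OF xy] zero_le_power2[of "cmod (\<psi> x) - cmod (\<psi> y)"]
      by (intro mult_left_mono) (auto simp: power2_eq_square algebra_simps)
    moreover have "Re (complex_of_real (r x y) * cnj (\<psi> x) * \<psi> y)
        = Re (cnj (\<psi> x) * \<psi> y) + (r x y - 1) * Re (cnj (\<psi> x) * \<psi> y)"
      by (simp add: algebra_simps)
    ultimately show ?thesis
      using abs_ge_minus_self[of "(r x y - 1) * Re (cnj (\<psi> x) * \<psi> y)"] by linarith
  qed
  have "(\<Sum>x\<in>B. \<Sum>y\<in>B. (cmod (\<psi> x))\<^sup>2 + (cmod (\<psi> y))\<^sup>2) = 2 * real (card B) * (\<Sum>x\<in>B. (cmod (\<psi> x))\<^sup>2)"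
    by (simp add: sum.distrib sum_distrib_left[symmetric] sum_distrib_right[symmetric] algebra_simps)
  then have "(\<Sum>x\<in>B. \<Sum>y\<in>B. Re (cnj (\<psi> x) * \<psi> y) - \<delta> * ((cmod (\<psi> x))\<^sup>2 + (cmod (\<psi> y))\<^sup>2) / 2)
     = (cmod (\<Sum>x\<in>B. \<psi> x))\<^sup>2 - \<delta> * real (card B) * (\<Sum>x\<in>B. (cmod (\<psi> x))\<^sup>2)"
    using square by (simp add: sum_subtractf sum_divide_distrib[symmetric] sum_distrib_left[symmetric])
  moreover have "(\<Sum>x\<in>B. \<Sum>y\<in>B. Re (cnj (\<psi> x) * \<psi> y) - \<delta> * ((cmod (\<psi> x))\<^sup>2 + (cmod (\<psi> y))\<^sup>2) / 2)
      \<le> Re (\<Sum>x\<in>B. \<Sum>y\<in>B. complex_of_real (r x y) * cnj (\<psi> x) * \<psi> y)"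
    unfolding Re_sum by (intro sum_mono pair)
  ultimately show ?thesis
    by simp
qed

definition block_average :: "nat \<Rightarrow> nat \<Rightarrow> ((nat \<Rightarrow> int) \<Rightarrow> complex) \<Rightarrow> (nat \<Rightarrow> int) \<Rightarrow> complex" where
  "block_average d N g x = complex_of_real (1 / real N ^ d) * (\<Sum>y\<in>block d (int N) (block_index N x). g y)"

lemma Hop_eq_on_grid:
  assumes "x \<in> grid d (L ^ m)"
  shows "Hop d L k m a mu0 g x = complex_of_real ((real L ^ k)\<^sup>2) *
      (\<Sum>\<mu><d. 2 * g x - g (nbr (grid d (L ^ m)) x \<mu> 1) - g (nbr (grid d (L ^ m)) x \<mu> (-1)))
    + complex_of_real (mu_bar mu0 L k) * g x
    + complex_of_real (a_seq a L (k + 1) / (real L)\<^sup>2) * block_average d (L ^ (k + 1)) g x"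
proof -
  have "real L ^ ((k + 1) * d) = real (L ^ (k + 1)) ^ d"
    by (simp only: of_nat_power power_mult)
  then have "Qadj L (k + 1) (Qavg d L (k + 1) g) x = block_average d (L ^ (k + 1)) g x"
    unfolding Qadj_def Qavg_def block_average_def block_index_def by simp
  moreover have "(\<Sum>\<mu><d. g (nbr (grid d (L ^ m)) x \<mu> 1) - 2 * g x + g (nbr (grid d (L ^ m)) x \<mu> (-1)))
     = - (\<Sum>\<mu><d. 2 * g x - g (nbr (grid d (L ^ m)) x \<mu> 1) - g (nbr (grid d (L ^ m)) x \<mu> (-1)))"
    by (subst sum_negf[symmetric]) (simp add: algebra_simps)
  ultimately show ?thesis
    unfolding Hop_def Let_def neumann_lap_def using assms by (simp add: power_one_over)
qed

lemma weighted_block_average_eq: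
  fixes g :: "(nat \<Rightarrow> int) \<Rightarrow> complex"
  assumes "N > 0" "w \<in> grid d M" "x \<in> block d (int N) w" and pos: "\<And>y. \<rho> y > 0"
  defines "\<psi> \<equiv> \<lambda>y. complex_of_real (\<rho> y) * g y"
  shows "complex_of_real ((\<rho> x)\<^sup>2) * cnj (g x) * block_average d N g x
    = complex_of_real (1 / real N ^ d) *
      (\<Sum>y\<in>block d (int N) w. complex_of_real (\<rho> x / \<rho> y) * cnj (\<psi> x) * \<psi> y)"
proof -
  have "block_index N x = w"
    using mem_block_iff[OF assms(1,2)] assms(3) by blast
  moreover have "complex_of_real (\<rho> x / \<rho> y) * cnj (\<psi> x) * \<psi> y
      = complex_of_real ((\<rho> x)\<^sup>2) * cnj (g x) * g y" for y
    using pos[of y] unfolding \<psi>_def by (simp add: field_simps power2_eq_square)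
  ultimately show ?thesis
    unfolding block_average_def by (simp add: sum_distrib_left algebra_simps)
qed

lemma Re_weighted_average_ge:
  fixes g :: "(nat \<Rightarrow> int) \<Rightarrow> complex"
  assumes N: "N > 0" and pos: "\<And>x. \<rho> x > 0"
    and osc: "\<And>w x y. w \<in> grid d M \<Longrightarrow> x \<in> block d (int N) w \<Longrightarrow> y \<in> block d (int N) w \<Longrightarrow>
      \<bar>\<rho> x / \<rho> y - 1\<bar> \<le> \<delta>"
  defines "\<psi> \<equiv> \<lambda>x. complex_of_real (\<rho> x) * g x"
  shows "Re (\<Sum>x\<in>grid d (N * M). complex_of_real ((\<rho> x)\<^sup>2) * cnj (g x) * block_average d N g x)
    \<ge> (\<Sum>w\<in>grid d M. (cmod (\<Sum>x\<in>block d (int N) w. \<psi> x))\<^sup>2 / real N ^ d)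
      - \<delta> * (\<Sum>x\<in>grid d (N * M). (cmod (\<psi> x))\<^sup>2)"
proof -
  let ?B = "\<lambda>w. block d (int N) w"
  let ?F = "\<lambda>w. \<Sum>x\<in>?B w. \<Sum>y\<in>?B w. complex_of_real (\<rho> x / \<rho> y) * cnj (\<psi> x) * \<psi> y"
  have "(\<Sum>x\<in>grid d (N * M). complex_of_real ((\<rho> x)\<^sup>2) * cnj (g x) * block_average d N g x)
     = (\<Sum>w\<in>grid d M. complex_of_real (1 / real N ^ d) * ?F w)"
  proof (unfold sum_grid_blocks[OF N], intro sum.cong refl)
    fix w assume w: "w \<in> grid d M"
    show "(\<Sum>x\<in>?B w. complex_of_real ((\<rho> x)\<^sup>2) * cnj (g x) * block_average d N g x)
        = complex_of_real (1 / real N ^ d) * ?F w"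
      unfolding sum_distrib_left \<psi>_def
      by (intro sum.cong refl weighted_block_average_eq[OF N w _ pos, where g=g, unfolded sum_distrib_left])
  qed
  then have "Re (\<Sum>x\<in>grid d (N * M). complex_of_real ((\<rho> x)\<^sup>2) * cnj (g x) * block_average d N g x)
     = (\<Sum>w\<in>grid d M. Re (?F w) / real N ^ d)"
    by (simp add: Re_sum)
  also have "\<dots> \<ge> (\<Sum>w\<in>grid d M.
      ((cmod (\<Sum>x\<in>?B w. \<psi> x))\<^sup>2 - \<delta> * real (card (?B w)) * (\<Sum>x\<in>?B w. (cmod (\<psi> x))\<^sup>2)) / real N ^ d)"
    using osc by (intro sum_mono divide_right_mono Re_weighted_block_form_ge finite_block) auto
  also have "(\<Sum>w\<in>grid d M.
      ((cmod (\<Sum>x\<in>?B w. \<psi> x))\<^sup>2 - \<delta> * real (card (?B w)) * (\<Sum>x\<in>?B w. (cmod (\<psi> x))\<^sup>2)) / real N ^ d)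
     = (\<Sum>w\<in>grid d M. (cmod (\<Sum>x\<in>?B w. \<psi> x))\<^sup>2 / real N ^ d - \<delta> * (\<Sum>x\<in>?B w. (cmod (\<psi> x))\<^sup>2))"
    using N by (intro sum.cong refl) (simp add: card_block diff_divide_distrib)
  also have "\<dots> = (\<Sum>w\<in>grid d M. (cmod (\<Sum>x\<in>?B w. \<psi> x))\<^sup>2 / real N ^ d)
      - \<delta> * (\<Sum>x\<in>grid d (N * M). (cmod (\<psi> x))\<^sup>2)"
    unfolding sum_grid_blocks[OF N] by (simp add: sum_subtractf sum_distrib_left)
  finally show ?thesis .
qed

lemma min_divide_mult_le:
  fixes s b c E A Z :: real
  assumes "Z \<le> c * E + A" "c > 0" "s \<ge> 0" "b \<ge> 0" "E \<ge> 0" "A \<ge> 0"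
  shows "min (s / c) b * Z \<le> s * E + b * A"
proof -
  have "min (s / c) b * Z \<le> min (s / c) b * (c * E + A)"
    using assms by (intro mult_left_mono) auto
  also have "\<dots> = (min (s / c) b * c) * E + min (s / c) b * A"
    by (simp add: algebra_simps)
  also have "\<dots> \<le> s * E + b * A"
    using assms by (intro add_mono mult_right_mono) (auto simp: min_def field_simps)
  finally show ?thesis .
qed

lemma Hop_weighted_coercive:
  fixes \<rho> :: "(nat \<Rightarrow> int) \<Rightarrow> real" and g :: "(nat \<Rightarrow> int) \<Rightarrow> complex"
  assumes N: "N = L ^ (k + 1)" "L ^ m = N * M" "N > 0"
    and pos: "\<And>x. \<rho> x > 0" and "\<epsilon> \<ge> 0"
    and ratio: "\<And>\<mu> z. \<mu> < d \<Longrightarrow> z \<in> grid d (L ^ m) \<Longrightarrow> z \<mu> + 1 < int (L ^ m) \<Longrightarrow>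
      (1 - \<rho> (z(\<mu> := z \<mu> + 1)) / \<rho> z)\<^sup>2 \<le> \<epsilon> \<and> (1 - \<rho> z / \<rho> (z(\<mu> := z \<mu> + 1)))\<^sup>2 \<le> \<epsilon>"
    and osc: "\<And>w x y. w \<in> grid d M \<Longrightarrow> x \<in> block d (int N) w \<Longrightarrow> y \<in> block d (int N) w \<Longrightarrow>
      \<bar>\<rho> x / \<rho> y - 1\<bar> \<le> \<delta>"
    and "a_seq a L (k + 1) \<ge> 0" "mu_bar mu0 L k \<ge> 0"
  defines "\<psi> \<equiv> \<lambda>x. complex_of_real (\<rho> x) * g x"
    and "s \<equiv> (real L ^ k)\<^sup>2" and "b \<equiv> a_seq a L (k + 1) / (real L)\<^sup>2"
  shows "Re (\<Sum>x\<in>grid d (L ^ m). complex_of_real ((\<rho> x)\<^sup>2) * cnj (g x) * Hop d L k m a mu0 g x)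
    \<ge> (min (s / (2 ^ d * real N ^ 2)) b - s * real d * \<epsilon> - b * \<delta>) * (\<Sum>x\<in>grid d (L ^ m). (cmod (\<psi> x))\<^sup>2)"
proof -
  let ?S = "grid d (L ^ m)"
  let ?r = "\<lambda>x. complex_of_real ((\<rho> x)\<^sup>2) * cnj (g x)"
  define Z where "Z = (\<Sum>x\<in>?S. (cmod (\<psi> x))\<^sup>2)"
  define E where "E = cube_energy {..<d} (\<lambda>_. 0) (L ^ m) \<psi>"
  define A where "A = (\<Sum>w\<in>grid d M. (cmod (\<Sum>x\<in>block d (int N) w. \<psi> x))\<^sup>2 / real N ^ d)"
  define K where "K = (\<Sum>x\<in>?S. ?r x * (\<Sum>\<mu><d. 2 * g x - g (nbr ?S x \<mu> 1) - g (nbr ?S x \<mu> (-1))))"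
  define P where "P = (\<Sum>x\<in>?S. ?r x * g x)"
  define Q where "Q = (\<Sum>x\<in>?S. ?r x * block_average d N g x)"
  have s0: "s > 0" and b0: "b \<ge> 0"
    using N assms(8) by (auto simp: s_def b_def)
  have "(\<Sum>x\<in>?S. ?r x * Hop d L k m a mu0 g x)
      = complex_of_real s * K + complex_of_real (mu_bar mu0 L k) * P + complex_of_real b * Q"
    unfolding K_def P_def Q_def s_def b_def N(1)
    by (simp add: Hop_eq_on_grid sum.distrib sum_distrib_left algebra_simps)
  then have split: "Re (\<Sum>x\<in>?S. ?r x * Hop d L k m a mu0 g x) = s * Re K + mu_bar mu0 L k * Re P + b * Re Q"
    by simp
  have K: "Re K \<ge> E - real d * \<epsilon> * Z"
    unfolding K_def E_def Z_def \<psi>_def by (rule Re_weighted_neumann_ge[OF pos assms(5) ratio])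
  have "Re (?r x * g x) = (\<rho> x)\<^sup>2 * (cmod (g x))\<^sup>2" for x
    unfolding cmod_power2 by (simp add: power2_eq_square algebra_simps)
  then have P: "Re P \<ge> 0"
    unfolding P_def Re_sum by (simp add: sum_nonneg)
  have Q: "Re Q \<ge> A - \<delta> * Z"
    unfolding Q_def A_def Z_def \<psi>_def N(2) by (rule Re_weighted_average_ge[OF N(3) pos osc])
  have mass: "Z \<le> 2 ^ d * real N ^ 2 * E + A"
    unfolding Z_def E_def A_def N(2) by (rule grid_poincare[OF N(3)])
  have "min (s / (2 ^ d * real N ^ 2)) b * Z \<le> s * E + b * A"
    using N(3) s0 b0 cube_energy_nonneg[of "{..<d}" "\<lambda>_. 0" "L ^ m" \<psi>] mass
    by (intro min_divide_mult_le) (auto simp: E_def A_def intro: sum_nonneg)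
  moreover have "s * Re K + mu_bar mu0 L k * Re P + b * Re Q \<ge> s * (E - real d * \<epsilon> * Z) + 0 + b * (A - \<delta> * Z)"
    using K P Q s0 b0 assms(9) by (intro add_mono mult_left_mono mult_nonneg_nonneg) auto
  ultimately show ?thesis
    unfolding split Z_def[symmetric] by (simp add: algebra_simps)
qed

section \<open>The Combes--Thomas weight\<close>

lemma a_seq_bounds:
  assumes "real L \<ge> 2" "0 < a" "j \<ge> 1"
  shows "a / 2 \<le> a_seq a L j" "a_seq a L j \<le> a"
proof -
  define x where "x = real L powr (-2)"
  define y where "y = real L powr (- 2 * real j)"
  have "x = 1 / (real L)\<^sup>2"
    unfolding x_def using assms(1) by (simp add: powr_minus_divide powr_numeral)
  moreover have "(real L)\<^sup>2 \<ge> 2\<^sup>2"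
    using assms(1) by (intro power_mono) auto
  ultimately have x: "x \<le> 1 / 4"
    using frac_le[of 1 1 4 "(real L)\<^sup>2"] by simp
  have y: "0 < y" "y \<le> x"
    unfolding x_def y_def using assms by (auto intro: powr_mono)
  have a: "a_seq a L j = a * (1 - x) / (1 - y)"
    unfolding a_seq_def x_def y_def by simp
  show "a_seq a L j \<le> a"
    unfolding a using x y assms(2) by (simp add: divide_le_eq mult_left_mono)
  have "a * x \<le> a * (1 / 4)"
    using x assms(2) by (intro mult_left_mono) auto
  then have "a / 2 \<le> a * (1 - x)"
    using assms(2) by (simp add: right_diff_distrib)
  also have "\<dots> \<le> a * (1 - x) / (1 - y)"
    using x y assms(2) by (simp add: le_divide_eq mult_left_mono)
  finally show "a / 2 \<le> a_seq a L j"
    unfolding a .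
qed

lemma abs_exp_minus_one_le:
  fixes t s :: real
  assumes "\<bar>t\<bar> \<le> s" "s \<le> 1 / 2"
  shows "\<bar>exp t - 1\<bar> \<le> 2 * s"
proof -
  have "exp t \<le> exp s"
    using assms by simp
  also have "\<dots> \<le> 1 + 2 * s"
    using assms by (intro real_exp_bound_lemma) auto
  finally show ?thesis
    using exp_ge_add_one_self[of t] assms by linarith
qed

definition corner_dist :: "nat \<Rightarrow> nat \<Rightarrow> (nat \<Rightarrow> int) \<Rightarrow> (nat \<Rightarrow> int) \<Rightarrow> int" where
  "corner_dist d N c x = (\<Sum>\<mu><d. \<bar>x \<mu> - int N * c \<mu>\<bar>)"

lemma corner_dist_lipschitz: "\<bar>corner_dist d N c x - corner_dist d N c y\<bar> \<le> (\<Sum>\<mu><d. \<bar>x \<mu> - y \<mu>\<bar>)"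
proof -
  have "\<bar>corner_dist d N c x - corner_dist d N c y\<bar> = \<bar>\<Sum>\<mu><d. \<bar>x \<mu> - int N * c \<mu>\<bar> - \<bar>y \<mu> - int N * c \<mu>\<bar>\<bar>"
    unfolding corner_dist_def by (simp add: sum_subtractf)
  also have "\<dots> \<le> (\<Sum>\<mu><d. \<bar>\<bar>x \<mu> - int N * c \<mu>\<bar> - \<bar>y \<mu> - int N * c \<mu>\<bar>\<bar>)"
    by (rule sum_abs)
  also have "\<dots> \<le> (\<Sum>\<mu><d. \<bar>x \<mu> - y \<mu>\<bar>)"
    by (intro sum_mono) arith
  finally show ?thesis .
qed

lemma corner_dist_step:
  assumes "\<mu> < d"
  shows "\<bar>corner_dist d N c (z(\<mu> := z \<mu> + 1)) - corner_dist d N c z\<bar> \<le> 1"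
proof -
  have "(\<Sum>\<nu><d. \<bar>(z(\<mu> := z \<mu> + 1)) \<nu> - z \<nu>\<bar>) = (\<Sum>\<nu><d. if \<nu> = \<mu> then 1 else 0)"
    by (intro sum.cong refl) auto
  then show ?thesis
    using corner_dist_lipschitz[of d N c "z(\<mu> := z \<mu> + 1)" z] assms by simp
qed

lemma corner_dist_block_lipschitz:
  assumes "x \<in> block d (int N) w" "y \<in> block d (int N) w"
  shows "\<bar>corner_dist d N c x - corner_dist d N c y\<bar> \<le> int d * int N"
proof -
  have "\<bar>x \<mu> - y \<mu>\<bar> \<le> int N" if "\<mu> < d" for \<mu>
    using assms that unfolding block_def by fastforce
  then have "(\<Sum>\<mu><d. \<bar>x \<mu> - y \<mu>\<bar>) \<le> (\<Sum>\<mu><d. int N)"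
    by (intro sum_mono) auto
  then show ?thesis
    using corner_dist_lipschitz[of d N c x y] by simp
qed

lemma corner_dist_own_block:
  assumes "x \<in> block d (int N) c"
  shows "corner_dist d N c x \<le> int d * int N"
proof -
  have "(\<Sum>\<mu><d. \<bar>x \<mu> - int N * c \<mu>\<bar>) \<le> (\<Sum>\<mu><d. int N)"
    using assms by (intro sum_mono) (auto simp: block_def)
  then show ?thesis
    unfolding corner_dist_def by simp
qed

lemma corner_dist_far_block:
  assumes "x \<in> block d (int N) w"
  shows "corner_dist d N c x \<ge> int N * (\<Sum>\<mu><d. \<bar>w \<mu> - c \<mu>\<bar>) - int d * int N"
proof -
  have "int N * \<bar>w \<mu> - c \<mu>\<bar> - int N \<le> \<bar>x \<mu> - int N * c \<mu>\<bar>" if "\<mu> < d" for \<mu>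
  proof -
    have "int N * w \<mu> \<le> x \<mu>" "x \<mu> < int N * w \<mu> + int N"
      using assms that by (auto simp: block_def)
    moreover have "int N * \<bar>w \<mu> - c \<mu>\<bar> = \<bar>int N * w \<mu> - int N * c \<mu>\<bar>"
      by (simp add: abs_mult right_diff_distrib[symmetric])
    ultimately show ?thesis
      by arith
  qed
  then have "(\<Sum>\<mu><d. int N * \<bar>w \<mu> - c \<mu>\<bar> - int N) \<le> corner_dist d N c x"
    unfolding corner_dist_def by (intro sum_mono) auto
  then show ?thesis
    by (simp add: sum_subtractf sum_distrib_left)
qed

definition coercivity_const :: "nat \<Rightarrow> real \<Rightarrow> real" where
  "coercivity_const d a = min (1 / 2 ^ d) (a / 2)"

definition decay_rate :: "nat \<Rightarrow> real \<Rightarrow> real" where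
  "decay_rate d a = coercivity_const d a / (12 * real d)"

definition exp_weight :: "nat \<Rightarrow> real \<Rightarrow> nat \<Rightarrow> (nat \<Rightarrow> int) \<Rightarrow> (nat \<Rightarrow> int) \<Rightarrow> real" where
  "exp_weight d a N c x = exp (decay_rate d a / real N * real_of_int (corner_dist d N c x))"

lemma coercivity_const_bounds:
  assumes "0 < a"
  shows "0 < coercivity_const d a" "coercivity_const d a \<le> 1 / 2 ^ d" "coercivity_const d a \<le> a / 2"
  using assms by (auto simp: coercivity_const_def)

lemma decay_rate_bounds:
  assumes "d \<ge> 1" "0 < a"
  shows "0 < decay_rate d a" "real d * decay_rate d a = coercivity_const d a / 12"
    "decay_rate d a \<le> 1 / 24"
proof -
  have "(2::real) ^ 1 \<le> 2 ^ d"
    using assms(1) by (intro power_increasing) auto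
  then have "(1::real) / 2 ^ d \<le> 1 / 2"
    by (intro divide_left_mono) auto
  then have l: "0 < coercivity_const d a" "coercivity_const d a \<le> 1 / 2"
    using coercivity_const_bounds[OF assms(2), of d] by linarith+
  show "0 < decay_rate d a" "real d * decay_rate d a = coercivity_const d a / 12"
    using l assms(1) by (simp_all add: decay_rate_def)
  have "decay_rate d a \<le> coercivity_const d a / 12"
    using l assms(1) by (simp add: decay_rate_def divide_simps)
  then show "decay_rate d a \<le> 1 / 24"
    using l by linarith
qed

lemma exp_weight_pos: "exp_weight d a N c x > 0"
  by (simp add: exp_weight_def)

lemma exp_weight_ratio_le:
  assumes "\<bar>corner_dist d N c x - corner_dist d N c y\<bar> \<le> D" "N > 0" "0 \<le> decay_rate d a"
    "decay_rate d a * real_of_int D / real N \<le> 1 / 2"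
  shows "\<bar>exp_weight d a N c x / exp_weight d a N c y - 1\<bar> \<le> 2 * (decay_rate d a * real_of_int D / real N)"
proof -
  have "exp_weight d a N c x / exp_weight d a N c y
      = exp (decay_rate d a / real N * real_of_int (corner_dist d N c x - corner_dist d N c y))"
    unfolding exp_weight_def by (simp add: exp_diff[symmetric] algebra_simps)
  moreover have "\<bar>decay_rate d a / real N * real_of_int (corner_dist d N c x - corner_dist d N c y)\<bar>
      \<le> decay_rate d a * real_of_int D / real N"
    using assms(1-3) by (simp add: abs_mult divide_right_mono mult_left_mono flip: of_int_abs)
  ultimately show ?thesis
    using abs_exp_minus_one_le assms(4) by presburger
qed

lemma exp_weight_step_ratio:
  fixes c z :: "nat \<Rightarrow> int"
  assumes "d \<ge> 1" "0 < a" "N > 0" "\<mu> < d"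
  defines "\<rho> \<equiv> exp_weight d a N c" and "z' \<equiv> z(\<mu> := z \<mu> + 1)"
  shows "(1 - \<rho> z' / \<rho> z)\<^sup>2 \<le> (2 * decay_rate d a / real N)\<^sup>2"
    "(1 - \<rho> z / \<rho> z')\<^sup>2 \<le> (2 * decay_rate d a / real N)\<^sup>2"
proof -
  let ?\<gamma> = "decay_rate d a"
  have "?\<gamma> / real N \<le> ?\<gamma>"
    using assms(3) decay_rate_bounds[OF assms(1,2)] by (simp add: divide_le_eq)
  then have small: "?\<gamma> * real_of_int 1 / real N \<le> 1 / 2"
    using decay_rate_bounds[OF assms(1,2)] by simp
  have "\<bar>\<rho> u / \<rho> v - 1\<bar> \<le> 2 * ?\<gamma> / real N" if "\<bar>corner_dist d N c u - corner_dist d N c v\<bar> \<le> 1" for u v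
    using exp_weight_ratio_le[OF that assms(3) _ small] decay_rate_bounds[OF assms(1,2)]
    unfolding \<rho>_def by simp
  then have "\<bar>1 - \<rho> z' / \<rho> z\<bar> \<le> 2 * ?\<gamma> / real N" "\<bar>1 - \<rho> z / \<rho> z'\<bar> \<le> 2 * ?\<gamma> / real N"
    using corner_dist_step[OF assms(4), of N c z] unfolding z'_def
    by (simp_all add: abs_minus_commute)
  then show "(1 - \<rho> z' / \<rho> z)\<^sup>2 \<le> (2 * ?\<gamma> / real N)\<^sup>2" "(1 - \<rho> z / \<rho> z')\<^sup>2 \<le> (2 * ?\<gamma> / real N)\<^sup>2"
    using power_mono[OF _ abs_ge_zero, of _ _ 2] by (metis power2_abs)+
qed

lemma exp_weight_block_oscillation:
  assumes "d \<ge> 1" "0 < a" "N > 0" "x \<in> block d (int N) w" "y \<in> block d (int N) w"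
  shows "\<bar>exp_weight d a N c x / exp_weight d a N c y - 1\<bar> \<le> 2 * (real d * decay_rate d a)"
proof -
  let ?\<gamma> = "decay_rate d a"
  have eq: "?\<gamma> * real_of_int (int d * int N) / real N = real d * ?\<gamma>"
    using assms(3) by simp
  have "(1::real) / 2 ^ d \<le> 1"
    by simp
  then have "real d * ?\<gamma> \<le> 1 / 2"
    using decay_rate_bounds(2)[OF assms(1,2)] coercivity_const_bounds(2)[OF assms(2), of d] by linarith
  then have "\<bar>exp_weight d a N c x / exp_weight d a N c y - 1\<bar>
      \<le> 2 * (?\<gamma> * real_of_int (int d * int N) / real N)"
    using decay_rate_bounds(1)[OF assms(1,2)] unfolding eq[symmetric]
    by (intro exp_weight_ratio_le[OF corner_dist_block_lipschitz[OF assms(4,5)] assms(3)]) auto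
  then show ?thesis
    unfolding eq .
qed

lemma decay_rate_error_le:
  assumes "d \<ge> 1" "0 < a"
  shows "4 * real d * (decay_rate d a)\<^sup>2 + 2 * (real d * decay_rate d a) \<le> coercivity_const d a / 2"
proof -
  note \<gamma> = decay_rate_bounds[OF assms]
  have "4 * real d * (decay_rate d a)\<^sup>2 = 4 * (real d * decay_rate d a) * decay_rate d a"
    by (simp add: power2_eq_square)
  also have "\<dots> \<le> 4 * (coercivity_const d a / 12) * (1 / 24)"
    unfolding \<gamma>(2) using \<gamma> coercivity_const_bounds(1)[OF assms(2), of d] by (intro mult_left_mono) auto
  finally show ?thesis
    unfolding \<gamma>(2) using coercivity_const_bounds(1)[OF assms(2), of d] by linarith
qed

lemma coercivity_coefficient_ge:
  fixes k :: nat
  assumes "d \<ge> 1" "0 < a" "a \<le> 1" "L > 1"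
  defines "N \<equiv> L ^ (k + 1)" and "\<gamma> \<equiv> decay_rate d a"
    and "s \<equiv> (real L ^ k)\<^sup>2" and "b \<equiv> a_seq a L (k + 1) / (real L)\<^sup>2"
  shows "coercivity_const d a / (2 * (real L)\<^sup>2)
    \<le> min (s / (2 ^ d * real N ^ 2)) b - s * real d * (2 * \<gamma> / real N)\<^sup>2 - b * (2 * (real d * \<gamma>))"
proof -
  define l where "l = coercivity_const d a"
  define \<delta> where "\<delta> = 2 * (real d * \<gamma>)"
  have L2: "(real L)\<^sup>2 > 0" "real L \<ge> 2"
    using assms(4) by auto
  have l: "0 < l" "l \<le> 1 / 2 ^ d" "l \<le> a / 2"
    unfolding l_def using coercivity_const_bounds[OF assms(2)] by auto
  have \<gamma>: "0 < \<gamma>"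
    unfolding \<gamma>_def using decay_rate_bounds[OF assms(1,2)] by auto
  have as: "a / 2 \<le> a_seq a L (k + 1)" "a_seq a L (k + 1) \<le> a"
    using a_seq_bounds[OF L2(2) assms(2)] by auto
  have NP: "real N = real L * real L ^ k"
    unfolding N_def by simp
  have "s / (2 ^ d * real N ^ 2) = 1 / (2 ^ d * (real L)\<^sup>2)"
    unfolding s_def NP using assms(4) by (simp add: power_mult_distrib)
  moreover have "l / (real L)\<^sup>2 \<le> 1 / (2 ^ d * (real L)\<^sup>2)"
    using l(2) L2(1) by (simp add: field_simps)
  moreover have "l / (real L)\<^sup>2 \<le> b"
    unfolding b_def using l(3) as(1) L2(1) by (intro divide_right_mono) auto
  ultimately have min: "l / (real L)\<^sup>2 \<le> min (s / (2 ^ d * real N ^ 2)) b"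
    by simp
  have kin: "s * real d * (2 * \<gamma> / real N)\<^sup>2 = 4 * real d * \<gamma>\<^sup>2 / (real L)\<^sup>2"
    unfolding s_def NP using assms(4) by (simp add: power_mult_distrib power_divide)
  have "b * \<delta> \<le> \<delta> / (real L)\<^sup>2"
    unfolding b_def \<delta>_def using as assms(3) \<gamma>(1) L2(1)
    by (simp add: divide_right_mono mult_left_le_one_le)
  moreover have "4 * real d * \<gamma>\<^sup>2 + \<delta> \<le> l / 2"
    unfolding \<gamma>_def \<delta>_def l_def by (rule decay_rate_error_le[OF assms(1,2)])
  then have "(4 * real d * \<gamma>\<^sup>2 + \<delta>) / (real L)\<^sup>2 \<le> (l / 2) / (real L)\<^sup>2"
    using L2(1) by (intro divide_right_mono) auto
  moreover have "(4 * real d * \<gamma>\<^sup>2 + \<delta>) / (real L)\<^sup>2 = 4 * real d * \<gamma>\<^sup>2 / (real L)\<^sup>2 + \<delta> / (real L)\<^sup>2"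
    by (rule add_divide_distrib)
  moreover have "l / (real L)\<^sup>2 - (l / 2) / (real L)\<^sup>2 = l / (2 * (real L)\<^sup>2)"
    by (simp add: field_simps)
  ultimately show ?thesis
    using min unfolding kin l_def[symmetric] \<delta>_def[symmetric] by linarith
qed

lemma Hop_exp_weight_coercive:
  fixes g :: "(nat \<Rightarrow> int) \<Rightarrow> complex" and c :: "nat \<Rightarrow> int"
  assumes "d \<ge> 1" "0 < a" "a \<le> 1" "L > 1" "k + 1 \<le> m" "mu0 \<ge> 0"
  defines "\<rho> \<equiv> exp_weight d a (L ^ (k + 1)) c"
  shows "Re (\<Sum>x\<in>grid d (L ^ m). complex_of_real ((\<rho> x)\<^sup>2) * cnj (g x) * Hop d L k m a mu0 g x)
    \<ge> coercivity_const d a / (2 * (real L)\<^sup>2) * (\<Sum>x\<in>grid d (L ^ m). (cmod (complex_of_real (\<rho> x) * g x))\<^sup>2)"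
proof -
  define N where "N = L ^ (k + 1)"
  define \<gamma> where "\<gamma> = decay_rate d a"
  have N: "N > 0" "L ^ m = N * L ^ (m - (k + 1))"
    unfolding N_def using assms(4,5) by (simp, metis le_add_diff_inverse power_add)
  have ratio: "(1 - \<rho> (z(\<mu> := z \<mu> + 1)) / \<rho> z)\<^sup>2 \<le> (2 * \<gamma> / real N)\<^sup>2 \<and>
      (1 - \<rho> z / \<rho> (z(\<mu> := z \<mu> + 1)))\<^sup>2 \<le> (2 * \<gamma> / real N)\<^sup>2" if "\<mu> < d" for \<mu> z
    using exp_weight_step_ratio[OF assms(1,2) N(1) that] unfolding \<rho>_def N_def \<gamma>_def by blast
  have osc: "\<bar>\<rho> x / \<rho> y - 1\<bar> \<le> 2 * (real d * \<gamma>)"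
    if "x \<in> block d (int N) w" "y \<in> block d (int N) w" for w x y
    using exp_weight_block_oscillation[OF assms(1,2) N(1) that] unfolding \<rho>_def N_def \<gamma>_def .
  have "a_seq a L (k + 1) \<ge> 0" "mu_bar mu0 L k \<ge> 0"
    using a_seq_bounds[of L a "k + 1"] assms(2,4,6) by (auto simp: mu_bar_def)
  then have "Re (\<Sum>x\<in>grid d (L ^ m). complex_of_real ((\<rho> x)\<^sup>2) * cnj (g x) * Hop d L k m a mu0 g x)
    \<ge> (min ((real L ^ k)\<^sup>2 / (2 ^ d * real N ^ 2)) (a_seq a L (k + 1) / (real L)\<^sup>2)
        - (real L ^ k)\<^sup>2 * real d * (2 * \<gamma> / real N)\<^sup>2 - a_seq a L (k + 1) / (real L)\<^sup>2 * (2 * (real d * \<gamma>)))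
      * (\<Sum>x\<in>grid d (L ^ m). (cmod (complex_of_real (\<rho> x) * g x))\<^sup>2)"
    using ratio osc unfolding \<rho>_def
    by (intro Hop_weighted_coercive[OF N_def N(2,1) exp_weight_pos]) auto
  moreover have "coercivity_const d a / (2 * (real L)\<^sup>2)
      \<le> min ((real L ^ k)\<^sup>2 / (2 ^ d * real N ^ 2)) (a_seq a L (k + 1) / (real L)\<^sup>2)
        - (real L ^ k)\<^sup>2 * real d * (2 * \<gamma> / real N)\<^sup>2 - a_seq a L (k + 1) / (real L)\<^sup>2 * (2 * (real d * \<gamma>))"
    unfolding N_def \<gamma>_def by (rule coercivity_coefficient_ge[OF assms(1-4)])
  ultimately show ?thesis
    by (meson mult_right_mono order_trans sum_nonneg zero_le_power2)
qed

section \<open>Invertibility\<close>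

definition fscale :: "complex \<Rightarrow> ('a \<Rightarrow> complex) \<Rightarrow> 'a \<Rightarrow> complex" where
  "fscale c f = (\<lambda>x. c * f x)"

interpretation fscale: vector_space fscale
  by unfold_locales (auto simp: fscale_def fun_eq_iff algebra_simps plus_fun_def)

definition supported :: "'a set \<Rightarrow> ('a \<Rightarrow> complex) set" where
  "supported S = {f. \<forall>x. x \<notin> S \<longrightarrow> f x = 0}"

lemma subspace_supported: "fscale.subspace (supported S)"
  unfolding fscale.subspace_def supported_def by (auto simp: fscale_def)

lemma supported_subset_span_indicators:
  assumes "finite S"
  shows "supported S \<subseteq> fscale.span ((\<lambda>s x. if x = s then 1 else 0) ` S)"
proof
  fix f assume f: "f \<in> supported S"
  have "f = (\<Sum>s\<in>S. fscale (f s) (\<lambda>x. if x = s then 1 else 0))"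
  proof
    fix x
    have "(\<Sum>s\<in>S. fscale (f s) (\<lambda>x. if x = s then 1 else 0)) x = (\<Sum>s\<in>S. f s * (if x = s then 1 else 0))"
      unfolding fscale_def by (induction S rule: infinite_finite_induct) auto
    also have "\<dots> = f x"
      using f assms unfolding supported_def by (auto simp: if_distrib cong: if_cong)
    finally show "f x = (\<Sum>s\<in>S. fscale (f s) (\<lambda>x. if x = s then 1 else 0)) x" by simp
  qed
  also have "\<dots> \<in> fscale.span ((\<lambda>s x. if x = s then 1 else 0) ` S)"
    by (intro fscale.span_sum fscale.span_scale fscale.span_base) auto
  finally show "f \<in> fscale.span ((\<lambda>s x. if x = s then 1 else 0) ` S)" .
qed

text \<open>Linear algebra in the finite-dimensional space \<open>supported S\<close>: an injective endomorphism
  maps a basis to an independent set of the same size, which therefore spans.\<close>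

lemma supported_subset_image_if_inj:
  fixes H :: "('a \<Rightarrow> complex) \<Rightarrow> 'a \<Rightarrow> complex"
  assumes hom: "module_hom fscale fscale H" and "finite S"
    and into: "\<And>f. H f \<in> supported S"
    and inj: "\<And>f. f \<in> supported S \<Longrightarrow> H f = 0 \<Longrightarrow> f = 0"
  shows "supported S \<subseteq> H ` supported S"
proof
  interpret h: module_hom fscale fscale H by (rule hom)
  fix y assume y: "y \<in> supported S"
  obtain B where B: "B \<subseteq> supported S" "fscale.independent B" "supported S \<subseteq> fscale.span B"
    using fscale.basis_exists by metis
  have "finite B"
    using fscale.independent_span_bound[OF _ B(2)] B(1) supported_subset_span_indicators[OF \<open>finite S\<close>]
      \<open>finite S\<close> by blast
  have span_B: "fscale.span B \<subseteq> supported S"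
    using fscale.span_minimal[OF B(1) subspace_supported] .
  have inj_B: "inj_on H (fscale.span B)"
  proof (rule inj_onI)
    fix f g assume fg: "f \<in> fscale.span B" "g \<in> fscale.span B" "H f = H g"
    then have "f - g \<in> supported S" "H (f - g) = 0"
      using span_B subspace_supported[of S] by (auto simp: fscale.subspace_diff h.diff)
    then show "f = g"
      using inj by fastforce
  qed
  have ind: "fscale.independent (H ` B)"
    by (rule h.independent_injective_image[OF B(2) inj_B])
  have card: "card (H ` B) = card B"
    using card_image[OF inj_on_subset[OF inj_B fscale.span_superset]] .
  have "y \<in> fscale.span (H ` B)"
  proof (rule ccontr)
    assume y_notin: "y \<notin> fscale.span (H ` B)"
    have "insert y (H ` B) \<subseteq> fscale.span B"
      using y B(3) into by auto
    then have "card (insert y (H ` B)) \<le> card B"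
      using fscale.independent_span_bound[OF \<open>finite B\<close> fscale.independent_insertI[OF y_notin ind]] by simp
    moreover have "y \<notin> H ` B"
      using y_notin fscale.span_superset by blast
    ultimately show False
      using card \<open>finite B\<close> by simp
  qed
  then show "y \<in> H ` supported S"
    using span_B by (auto simp: h.span_image)
qed

lemma neumann_lap_linear:
  "neumann_lap d e Om (\<lambda>x. c * f x + g x) x = c * neumann_lap d e Om f x + neumann_lap d e Om g x"
proof -
  have "(\<Sum>\<mu><d. (c * f (nbr Om x \<mu> 1) + g (nbr Om x \<mu> 1)) - 2 * (c * f x + g x)
        + (c * f (nbr Om x \<mu> (-1)) + g (nbr Om x \<mu> (-1))))
     = c * (\<Sum>\<mu><d. f (nbr Om x \<mu> 1) - 2 * f x + f (nbr Om x \<mu> (-1)))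
       + (\<Sum>\<mu><d. g (nbr Om x \<mu> 1) - 2 * g x + g (nbr Om x \<mu> (-1)))"
    by (simp add: sum_distrib_left sum.distrib[symmetric] algebra_simps)
  then show ?thesis
    unfolding neumann_lap_def by (simp add: algebra_simps)
qed

lemma Hop_linear: "module_hom fscale fscale (Hop d L k m a mu0)"
proof -
  have lin: "Hop d L k m a mu0 (\<lambda>x. c * f x + g x) = (\<lambda>x. c * Hop d L k m a mu0 f x + Hop d L k m a mu0 g x)"
    for c f g
    unfolding Hop_def Let_def Qadj_def Qavg_def neumann_lap_linear
    by (simp add: fun_eq_iff sum.distrib sum_distrib_left algebra_simps)
  have zero: "Hop d L k m a mu0 (\<lambda>_. 0) = (\<lambda>_. 0)"
    using lin[of 1 "\<lambda>_. 0" "\<lambda>_. 0"] by (simp add: fun_eq_iff)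
  show ?thesis
    by unfold_locales (use lin[of 1] lin[where g = "\<lambda>_. 0"] zero in \<open>simp_all add: plus_fun_def fscale_def\<close>)
qed

lemma Hop_injective:
  assumes "d \<ge> 1" "0 < a" "a \<le> 1" "L > 1" "k + 1 \<le> m" "mu0 \<ge> 0"
    and g: "g \<in> supported (grid d (L ^ m))" and "Hop d L k m a mu0 g = 0"
  shows "g = 0"
proof -
  let ?S = "grid d (L ^ m)"
  let ?\<rho> = "exp_weight d a (L ^ (k + 1)) (\<lambda>_. 0)"
  define \<kappa> where "\<kappa> = coercivity_const d a / (2 * (real L)\<^sup>2)"
  have "\<kappa> * (\<Sum>x\<in>?S. (cmod (complex_of_real (?\<rho> x) * g x))\<^sup>2) \<le> 0"
    using Hop_exp_weight_coercive[OF assms(1-6), of "\<lambda>_. 0" g] assms(8) unfolding \<kappa>_def by simp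
  moreover have "\<kappa> > 0"
    unfolding \<kappa>_def using coercivity_const_bounds(1)[OF assms(2)] assms(4) by simp
  ultimately have "(\<Sum>x\<in>?S. (cmod (complex_of_real (?\<rho> x) * g x))\<^sup>2) = 0"
    by (meson mult_le_0_iff not_le order_antisym sum_nonneg zero_le_power2)
  then have "\<forall>x\<in>?S. (cmod (complex_of_real (?\<rho> x) * g x))\<^sup>2 = 0"
    using sum_nonneg_eq_0_iff[OF finite_grid, where f = "\<lambda>x. (cmod (complex_of_real (?\<rho> x) * g x))\<^sup>2"]
    by simp
  then have "\<forall>x\<in>?S. g x = 0"
    using exp_weight_pos[of d a "L ^ (k + 1)" "\<lambda>_. 0"] by (simp add: norm_mult) (metis less_irrefl)
  then show "g = 0"
    using g by (auto simp: fun_eq_iff supported_def)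
qed

lemma Gtilde_inverse:
  assumes "d \<ge> 1" "0 < a" "a \<le> 1" "L > 1" "k + 1 \<le> m" "mu0 \<ge> 0"
    and "f \<in> supported (grid d (L ^ m))"
  shows "Hop d L k m a mu0 (Gtilde d L k m a mu0 f) = f"
proof -
  have "supported (grid d (L ^ m)) \<subseteq> Hop d L k m a mu0 ` supported (grid d (L ^ m))"
    using Hop_injective[OF assms(1-6)]
    by (intro supported_subset_image_if_inj[OF Hop_linear finite_grid]) (auto simp: supported_def Hop_def)
  then have "f \<in> Hop d L k m a mu0 ` supported (grid d (L ^ m))"
    using assms(7) by blast
  then show ?thesis
    unfolding Gtilde_def supported_def[symmetric] by (rule f_inv_into_f)
qed

section \<open>Decay of the resolvent\<close>

lemma cmod_sum_cnj_mult_le: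
  "cmod (\<Sum>x\<in>A. cnj (u x) * v x) \<le> L2_set (\<lambda>x. cmod (u x)) A * L2_set (\<lambda>x. cmod (v x)) A"
proof -
  have "cmod (\<Sum>x\<in>A. cnj (u x) * v x) \<le> (\<Sum>x\<in>A. \<bar>cmod (u x)\<bar> * \<bar>cmod (v x)\<bar>)"
    using norm_sum[of "\<lambda>x. cnj (u x) * v x" A] by (simp add: norm_mult)
  also have "\<dots> \<le> L2_set (\<lambda>x. cmod (u x)) A * L2_set (\<lambda>x. cmod (v x)) A"
    by (rule L2_set_mult_ineq)
  finally show ?thesis .
qed

lemma cmod_sum_cnj_mult_le_weighted:
  fixes \<rho> :: "'a \<Rightarrow> real"
  assumes pos: "\<And>x. \<rho> x > 0"
  shows "cmod (\<Sum>x\<in>A. cnj (u x) * v x)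
    \<le> L2_set (\<lambda>x. cmod (u x) / \<rho> x) A * L2_set (\<lambda>x. cmod (complex_of_real (\<rho> x) * v x)) A"
proof -
  have "(\<Sum>x\<in>A. cnj (u x) * v x)
      = (\<Sum>x\<in>A. cnj (complex_of_real (1 / \<rho> x) * u x) * (complex_of_real (\<rho> x) * v x))"
    using pos by (intro sum.cong refl) (simp add: less_imp_neq[symmetric])
  also have "cmod \<dots> \<le> L2_set (\<lambda>x. cmod (complex_of_real (1 / \<rho> x) * u x)) A
      * L2_set (\<lambda>x. cmod (complex_of_real (\<rho> x) * v x)) A"
    by (rule cmod_sum_cnj_mult_le)
  also have "L2_set (\<lambda>x. cmod (complex_of_real (1 / \<rho> x) * u x)) A = L2_set (\<lambda>x. cmod (u x) / \<rho> x) A"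
    using pos by (intro L2_set_cong refl) (simp add: norm_divide abs_of_pos)
  finally show ?thesis .
qed

lemma weighted_solution_bound:
  fixes \<rho> :: "'a \<Rightarrow> real" and g u :: "'a \<Rightarrow> complex"
  assumes "l > 0"
    and coercive: "Re (\<Sum>x\<in>S. complex_of_real ((\<rho> x)\<^sup>2) * cnj (g x) * u x)
      \<ge> l * (\<Sum>x\<in>S. (cmod (complex_of_real (\<rho> x) * g x))\<^sup>2)"
  shows "L2_set (\<lambda>x. cmod (complex_of_real (\<rho> x) * g x)) S
    \<le> L2_set (\<lambda>x. cmod (complex_of_real (\<rho> x) * u x)) S / l"
proof -
  define Z where "Z = L2_set (\<lambda>x. cmod (complex_of_real (\<rho> x) * g x)) S"
  define W where "W = L2_set (\<lambda>x. cmod (complex_of_real (\<rho> x) * u x)) S"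
  have "l * Z\<^sup>2 \<le> Re (\<Sum>x\<in>S. complex_of_real ((\<rho> x)\<^sup>2) * cnj (g x) * u x)"
    using coercive unfolding Z_def L2_set_def by (simp add: sum_nonneg)
  also have "\<dots> \<le> cmod (\<Sum>x\<in>S. complex_of_real ((\<rho> x)\<^sup>2) * cnj (g x) * u x)"
    by (rule complex_Re_le_cmod)
  also have "(\<Sum>x\<in>S. complex_of_real ((\<rho> x)\<^sup>2) * cnj (g x) * u x)
      = (\<Sum>x\<in>S. cnj (complex_of_real (\<rho> x) * g x) * (complex_of_real (\<rho> x) * u x))"
    by (intro sum.cong refl) (simp add: power2_eq_square algebra_simps)
  also have "cmod \<dots> \<le> Z * W"
    unfolding Z_def W_def by (rule cmod_sum_cnj_mult_le)
  finally have "(l * Z) * Z \<le> W * Z"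
    by (simp add: power2_eq_square algebra_simps)
  moreover have "Z \<ge> 0" "W \<ge> 0"
    unfolding Z_def W_def by simp_all
  ultimately have "l * Z \<le> W"
    by (cases "Z = 0") (auto intro: mult_right_le_imp_le)
  then show ?thesis
    using \<open>l > 0\<close> unfolding Z_def W_def by (simp add: field_simps)
qed

lemma exp_weight_ge:
  assumes "x \<in> block d (int N) w" "N > 0" "0 \<le> decay_rate d a"
  shows "exp (decay_rate d a * (\<Sum>\<mu><d. real_of_int \<bar>w \<mu> - c \<mu>\<bar>) - real d * decay_rate d a)
    \<le> exp_weight d a N c x"
proof -
  let ?l = "\<Sum>\<mu><d. real_of_int \<bar>w \<mu> - c \<mu>\<bar>"
  have "real_of_int (int N * (\<Sum>\<mu><d. \<bar>w \<mu> - c \<mu>\<bar>) - int d * int N) \<le> real_of_int (corner_dist d N c x)"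
    using corner_dist_far_block[OF assms(1)] by (simp only: of_int_le_iff)
  then have "real N * ?l - real d * real N \<le> real_of_int (corner_dist d N c x)"
    by simp
  then have "decay_rate d a / real N * (real N * ?l - real d * real N)
      \<le> decay_rate d a / real N * real_of_int (corner_dist d N c x)"
    using assms(2,3) by (intro mult_left_mono) auto
  moreover have "decay_rate d a / real N * (real N * ?l - real d * real N) = decay_rate d a * ?l - real d * decay_rate d a"
    using assms(2) by (simp add: field_simps)
  ultimately show ?thesis
    unfolding exp_weight_def by simp
qed

lemma exp_weight_le:
  assumes "x \<in> block d (int N) c" "N > 0" "0 \<le> decay_rate d a"
  shows "exp_weight d a N c x \<le> exp (real d * decay_rate d a)"
proof -
  have "real_of_int (corner_dist d N c x) \<le> real_of_int (int d * int N)"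
    using corner_dist_own_block[OF assms(1)] by (simp only: of_int_le_iff)
  then have "decay_rate d a / real N * real_of_int (corner_dist d N c x) \<le> decay_rate d a / real N * (real d * real N)"
    using assms(2,3) by (intro mult_left_mono) auto
  then show ?thesis
    using assms(2) unfolding exp_weight_def by (simp add: mult.commute)
qed

lemma L2_set_div_exp_weight_le:
  assumes f: "\<forall>x. x \<notin> block d (int N) w \<longrightarrow> f x = 0" and "N > 0" "0 \<le> decay_rate d a"
  shows "L2_set (\<lambda>x. cmod (f x) / exp_weight d a N c x) S
    \<le> exp (real d * decay_rate d a - decay_rate d a * (\<Sum>\<mu><d. real_of_int \<bar>w \<mu> - c \<mu>\<bar>))
      * L2_set (\<lambda>x. cmod (f x)) S"
proof -
  let ?l = "\<Sum>\<mu><d. real_of_int \<bar>w \<mu> - c \<mu>\<bar>"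
  let ?t = "decay_rate d a * ?l - real d * decay_rate d a"
  have "cmod (f x) / exp_weight d a N c x \<le> exp (real d * decay_rate d a - decay_rate d a * ?l) * cmod (f x)" for x
  proof (cases "x \<in> block d (int N) w")
    case True
    then have "cmod (f x) / exp_weight d a N c x \<le> cmod (f x) / exp ?t"
      using exp_weight_ge[OF True assms(2,3), of c] exp_weight_pos[of d a N c x]
      by (intro divide_left_mono) auto
    also have "cmod (f x) / exp ?t = exp (real d * decay_rate d a - decay_rate d a * ?l) * cmod (f x)"
      by (simp add: exp_diff)
    finally show ?thesis .
  qed (use f in simp)
  then have "L2_set (\<lambda>x. cmod (f x) / exp_weight d a N c x) S
      \<le> L2_set (\<lambda>x. exp (real d * decay_rate d a - decay_rate d a * ?l) * cmod (f x)) S"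
    by (intro L2_set_mono) (simp_all add: exp_weight_pos less_imp_le)
  then show ?thesis
    by (simp add: L2_set_right_distrib)
qed

lemma L2_set_mult_exp_weight_le:
  assumes f: "\<forall>x. x \<notin> block d (int N) c \<longrightarrow> f x = 0" and "N > 0" "0 \<le> decay_rate d a"
  shows "L2_set (\<lambda>x. cmod (complex_of_real (exp_weight d a N c x) * f x)) S
    \<le> exp (real d * decay_rate d a) * L2_set (\<lambda>x. cmod (f x)) S"
proof -
  have "cmod (complex_of_real (exp_weight d a N c x) * f x) \<le> exp (real d * decay_rate d a) * cmod (f x)" for x
  proof (cases "x \<in> block d (int N) c")
    case True
    then show ?thesis
      using exp_weight_le[OF True assms(2,3)] exp_weight_pos[of d a N c x]
      by (simp add: norm_mult mult_right_mono)
  qed (use f in simp)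
  then show ?thesis
    by (simp add: L2_set_mono L2_set_right_distrib)
qed

lemma Gtilde_block_decay_sum:
  fixes f f' :: "(nat \<Rightarrow> int) \<Rightarrow> complex"
  assumes "d \<ge> 1" "0 < a" "a \<le> 1" "L > 1" "k + 1 \<le> m" "mu0 \<ge> 0"
    and w': "w' \<in> grid d (L ^ (m - (k + 1)))"
    and f: "\<forall>x. x \<notin> block d (int (L ^ (k + 1))) w \<longrightarrow> f x = 0"
    and f': "\<forall>x. x \<notin> block d (int (L ^ (k + 1))) w' \<longrightarrow> f' x = 0"
  defines "S \<equiv> grid d (L ^ m)" and "\<gamma> \<equiv> decay_rate d a"
  shows "cmod (\<Sum>x\<in>S. cnj (f x) * Gtilde d L k m a mu0 f' x)
    \<le> 2 * exp (2 * real d * \<gamma>) / coercivity_const d a * (real L)\<^sup>2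
      * exp (- \<gamma> * (\<Sum>\<mu><d. real_of_int \<bar>w \<mu> - w' \<mu>\<bar>))
      * L2_set (\<lambda>x. cmod (f x)) S * L2_set (\<lambda>x. cmod (f' x)) S"
proof -
  define N where "N = L ^ (k + 1)"
  define \<rho> where "\<rho> = exp_weight d a N w'"
  define g where "g = Gtilde d L k m a mu0 f'"
  define l where "l = coercivity_const d a / (2 * (real L)\<^sup>2)"
  let ?l1 = "\<Sum>\<mu><d. real_of_int \<bar>w \<mu> - w' \<mu>\<bar>"
  have N: "N > 0" and l: "l > 0" and \<gamma>: "0 \<le> \<gamma>"
    using assms(4) coercivity_const_bounds(1)[OF assms(2)] decay_rate_bounds(1)[OF assms(1,2)]
    by (simp_all add: N_def l_def \<gamma>_def)
  have "f' \<in> supported S"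
    using f' block_subset_grid[OF w' assms(5)] assms(4) unfolding S_def supported_def by auto
  then have "Hop d L k m a mu0 g = f'"
    unfolding g_def S_def by (rule Gtilde_inverse[OF assms(1-6)])
  then have "L2_set (\<lambda>x. cmod (complex_of_real (\<rho> x) * g x)) S
      \<le> L2_set (\<lambda>x. cmod (complex_of_real (\<rho> x) * f' x)) S / l"
    using Hop_exp_weight_coercive[OF assms(1-6), of w' g] unfolding \<rho>_def N_def l_def S_def
    by (intro weighted_solution_bound[OF l[unfolded l_def]]) simp
  also have "\<dots> \<le> exp (real d * \<gamma>) * L2_set (\<lambda>x. cmod (f' x)) S / l"
    using L2_set_mult_exp_weight_le[OF f'[folded N_def] N \<gamma>[unfolded \<gamma>_def]] l
    unfolding \<rho>_def \<gamma>_def by (simp add: divide_right_mono)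
  finally have g_bound: "L2_set (\<lambda>x. cmod (complex_of_real (\<rho> x) * g x)) S
      \<le> exp (real d * \<gamma>) * L2_set (\<lambda>x. cmod (f' x)) S / l" .
  have "cmod (\<Sum>x\<in>S. cnj (f x) * g x)
      \<le> L2_set (\<lambda>x. cmod (f x) / \<rho> x) S * L2_set (\<lambda>x. cmod (complex_of_real (\<rho> x) * g x)) S"
    unfolding \<rho>_def by (rule cmod_sum_cnj_mult_le_weighted[OF exp_weight_pos])
  also have "\<dots> \<le> (exp (real d * \<gamma> - \<gamma> * ?l1) * L2_set (\<lambda>x. cmod (f x)) S)
      * (exp (real d * \<gamma>) * L2_set (\<lambda>x. cmod (f' x)) S / l)"
    using L2_set_div_exp_weight_le[OF f[folded N_def] N \<gamma>[unfolded \<gamma>_def], of w' S] g_bound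
    unfolding \<rho>_def \<gamma>_def by (intro mult_mono) auto
  also have "\<dots> = 2 * exp (2 * real d * \<gamma>) / coercivity_const d a * (real L)\<^sup>2
      * exp (- \<gamma> * ?l1) * L2_set (\<lambda>x. cmod (f x)) S * L2_set (\<lambda>x. cmod (f' x)) S"
    using l unfolding l_def by (simp add: exp_diff exp_minus field_simps flip: exp_add)
  finally show ?thesis
    unfolding g_def .
qed

lemma Gtilde_block_decay:
  fixes f f' :: "(nat \<Rightarrow> int) \<Rightarrow> complex"
  assumes "d \<ge> 1" "0 < a" "a \<le> 1" "L > 1" "k + 1 \<le> m" "mu0 \<ge> 0"
    and "w' \<in> grid d (L ^ (m - (k + 1)))"
    and "\<forall>x. x \<notin> block d (int (L ^ (k + 1))) w \<longrightarrow> f x = 0"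
    and "\<forall>x. x \<notin> block d (int (L ^ (k + 1))) w' \<longrightarrow> f' x = 0"
  defines "\<eta> \<equiv> 1 / real L ^ k" and "S \<equiv> grid d (L ^ m)" and "\<gamma> \<equiv> decay_rate d a"
  shows "cmod (inner_L2 d \<eta> S f (Gtilde d L k m a mu0 f'))
    \<le> 2 * exp (2 * real d * \<gamma>) / coercivity_const d a * (real L)\<^sup>2
      * exp (- \<gamma> / real L * (real L ^ (k + 1) * \<eta> * sqrt (\<Sum>\<mu><d. (real_of_int (w \<mu> - w' \<mu>))\<^sup>2)))
      * norm_L2 d \<eta> S f * norm_L2 d \<eta> S f'"
proof -
  let ?C = "2 * exp (2 * real d * \<gamma>) / coercivity_const d a * (real L)\<^sup>2"
  let ?l1 = "\<Sum>\<mu><d. real_of_int \<bar>w \<mu> - w' \<mu>\<bar>"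
  let ?l2 = "sqrt (\<Sum>\<mu><d. (real_of_int (w \<mu> - w' \<mu>))\<^sup>2)"
  have \<eta>: "\<eta> > 0" and C: "?C \<ge> 0" and \<gamma>: "\<gamma> \<ge> 0"
    using assms(4) coercivity_const_bounds(1)[OF assms(2), of d] decay_rate_bounds(1)[OF assms(1,2)]
    by (simp_all add: \<eta>_def \<gamma>_def)
  let ?A = "L2_set (\<lambda>x. cmod (f x)) S * L2_set (\<lambda>x. cmod (f' x)) S"
  have A: "?A \<ge> 0"
    by simp
  have "cmod (inner_L2 d \<eta> S f (Gtilde d L k m a mu0 f'))
      = \<eta> ^ d * cmod (\<Sum>x\<in>S. cnj (f x) * Gtilde d L k m a mu0 f' x)"
    using \<eta> by (simp add: inner_L2_def norm_mult norm_power)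
  also have "\<dots> \<le> \<eta> ^ d * (?C * exp (- \<gamma> * ?l1) * ?A)"
    using Gtilde_block_decay_sum[OF assms(1-9)] \<eta> unfolding S_def \<gamma>_def
    by (intro mult_left_mono) (simp_all add: mult.assoc)
  also have "\<dots> \<le> \<eta> ^ d * (?C * exp (- \<gamma> * ?l2) * ?A)"
    using \<gamma> L2_set_le_sum_abs[of "\<lambda>\<mu>. real_of_int (w \<mu> - w' \<mu>)" "{..<d}"] \<eta> C A
    by (intro mult_left_mono mult_right_mono) (simp_all add: L2_set_def mult_left_mono)
  also have "\<dots> = ?C * exp (- \<gamma> / real L * (real L ^ (k + 1) * \<eta> * ?l2)) * norm_L2 d \<eta> S f * norm_L2 d \<eta> S f'"
    using assms(4) \<eta> by (simp add: \<eta>_def norm_L2_def L2_set_def real_sqrt_mult)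
  finally show ?thesis .
qed

theorem mainTheorem4:
  fixes d :: nat and a :: real
  assumes "d \<ge> 1" and "0 < a" and "a \<le> 1"
  shows "\<exists>c c1 :: real. c > 0 \<and> c1 > 0 \<and>
    (\<forall>(L::nat) (k::nat) (m::nat) (mu0::real) (w::nat \<Rightarrow> int) (w'::nat \<Rightarrow> int)
       (f::(nat \<Rightarrow> int) \<Rightarrow> complex) (f'::(nat \<Rightarrow> int) \<Rightarrow> complex).
      odd L \<and> L > 1 \<and> k \<ge> 1 \<and> m \<ge> k + 1 \<and> mu0 \<ge> 0 \<and>
      w \<in> grid d (L ^ (m - (k + 1))) \<and> w' \<in> grid d (L ^ (m - (k + 1))) \<and>
      (\<forall>x. x \<notin> block d (int (L ^ (k + 1))) w \<longrightarrow> f x = 0) \<and>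
      (\<forall>x. x \<notin> block d (int (L ^ (k + 1))) w' \<longrightarrow> f' x = 0) \<longrightarrow>
      cmod (inner_L2 d (1 / real L ^ k) (grid d (L ^ m)) f (Gtilde d L k m a mu0 f'))
        \<le> c * (real L)\<^sup>2 *
           exp (- c1 / real L * (real L ^ (k + 1) * (1 / real L ^ k) *
                 sqrt (\<Sum>\<mu><d. (real_of_int (w \<mu> - w' \<mu>))\<^sup>2)))
           * norm_L2 d (1 / real L ^ k) (grid d (L ^ m)) f
           * norm_L2 d (1 / real L ^ k) (grid d (L ^ m)) f')"
proof -
  let ?C = "2 * exp (2 * real d * decay_rate d a) / coercivity_const d a"
  have "0 < ?C" "0 < decay_rate d a"
    using coercivity_const_bounds(1)[OF assms(2)] decay_rate_bounds(1)[OF assms(1,2)] by simp_all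
  then show ?thesis
    using Gtilde_block_decay[OF assms] by blast
qed

end
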